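(* Let $(C,\Delta_C)$ be a finite-dimensional left ${\cal H}_R$-comodule. If $\dim C=1$, then $C$ is trivial, i.e. $\Delta_C(x)=1\otimes x$ for all $x\in C$. If $\dim C=n+1$ with $n\ge1$, then there exists a family $(p_{i,j})_{1\le i\le j\le n}$ of $\frac{n(n+1)}{2}$ primitive elements of ${\cal H}_R$ such that $C$ is isomorphic, as a comodule, to $C_{(p_{i,j})}$.
   Context: A rooted tree is a finite connected and simply connected graph with a distinguished vertex (the root), edges oriented away from the root; its weight is its number of vertices. ${\cal H}_R$ is the commutative polynomial algebra over $\mathbb{Q}$ on the isomorphism classes of rooted trees; monomials are forests ($1$ is the empty forest). An admissible cut $C$ of a tree $t$ is a nonempty set of edges such that every path from the root to a vertex contains at most one edge of $C$; removing them gives a forest in which $R^C(t)$ is the tree containing the root and $P^C(t)$ the product of the others. ${\cal H}_R$ is a Hopf algebra with coproduct the algebra morphism $\Delta$ with $\Delta(t)=1\otimes t+t\otimes1+\sum_C P^C(t)\otimes R^C(t)$ on trees, counit $\varepsilon(1)=1$, $\varepsilon(t)=0$; $x$ is primitive iff $\Delta(x)=x\otimes1+1\otimes x$. For forests $M,N$: $M\top N=0$ if $N=1$, otherwise $M\top N=\frac{1}{weight(N)}\sum_v N_v$, $v$ over vertices of $N$, $N_v$ obtained from $N$ by attaching every tree of $M$ to $v$; extended bilinearly; $p_k\top\cdots\top p_1:=(p_k\top\cdots\top p_2)\top p_1$. For $1\le i\le j$, a decomposition of $\{i,\dots,j\}$ is a partition into intervals $I_{i_1,j_1}\cdots I_{i_k,j_k}$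 with $i=i_1\le j_1<i_2\le\cdots<i_k\le j_k=j$, $i_{r+1}=j_r+1$; ${\cal D}_{i,j}$ is the set of these. For a family $(p_{i,j})_{1\le i\le j\le n}$ of primitive elements, $C_{(p_{i,j})}$ is the vector space with basis $e_0,\dots,e_n$ and comodule map $\Delta(e_0)=1\otimes e_0$, $\Delta(e_i)=\sum_{j=0}^{i-1}\big(\sum_{I_{i_1,j_1}\cdots I_{i_k,j_k}\in{\cal D}_{j+1,i}}p_{i_k,j_k}\top\cdots\top p_{i_1,j_1}\big)\otimes e_j+1\otimes e_i$ (this is a left ${\cal H}_R$-comodule). *)

theory Defs
  imports Complex_Main "HOL-Library.Multiset"
begin

text \<open>An isomorphism class of rooted trees is a root together with the multiset of
 (isomorphism classes of) the subtrees hanging from the children of the root.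
 A forest (a monomial of H_R) is a multiset of trees; the empty forest is 1.\<close>

datatype rtree = Node "rtree multiset"

type_synonym forest = "rtree multiset"

primrec weight :: "rtree \<Rightarrow> nat" where
  "weight (Node ts) = Suc (sum_mset (image_mset weight ts))"

definition fweight :: "forest \<Rightarrow> nat" where
  "fweight F = sum_mset (image_mset weight F)"

definition pairprod :: "(forest \<times> forest) multiset \<Rightarrow> (forest \<times> forest) multiset
    \<Rightarrow> (forest \<times> forest) multiset" where
  "pairprod A B = sum_mset (image_mset (\<lambda>(p1,r1). image_mset (\<lambda>(p2,r2). (p1 + p2, r1 + r2)) B) A)"

definition comb :: "(forest \<times> forest) multiset multiset \<Rightarrow> (forest \<times> forest) multiset" where
  "comb X = fold_mset pairprod {#({#}, {#})#} X"

text \<open>cuts t enumerates (with multiplicity one per edge set) all sets C of edges of t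
 such that every path from the root contains at most one edge of C, INCLUDING the
 empty set, each recorded as the pair (P^C(t), R^C(t)).  Such a C is determined by
 choosing, independently for every child c of the root, either to cut the edge to c
 (then nothing below c is cut, and the subtree at c becomes a tree of P^C) or not
 to cut it and to choose recursively such an edge set in the subtree at c.\<close>
primrec cuts :: "rtree \<Rightarrow> (forest \<times> rtree) multiset" where
  "cuts (Node ts) =
     image_mset (\<lambda>(P, R). (P, Node R))
       (comb (image_mset (\<lambda>t. {#({#t#}, {#})#} + image_mset (\<lambda>(P, R). (P, {#R#})) (cuts t)) ts))"

text \<open>Admissible cuts = nonempty such edge sets (the empty set gives (1, t) exactly once).\<close>
definition adm_cuts :: "rtree \<Rightarrow> (forest \<times> rtree) multiset" where
  "adm_cuts t = cuts t - {#({#}, t)#}"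

text \<open>Delta(t) = 1 (x) t + t (x) 1 + sum_C P^C(t) (x) R^C(t), as a multiset of pairs of
 forests (basis elements of H_R (x) H_R).\<close>
definition cop_tree :: "rtree \<Rightarrow> (forest \<times> forest) multiset" where
  "cop_tree t = {#({#}, {#t#}), ({#t#}, {#})#} + image_mset (\<lambda>(P, R). (P, {#R#})) (adm_cuts t)"

text \<open>Delta is an algebra morphism: Delta of a forest is the product of the Delta's of its trees.\<close>
definition cop_forest :: "forest \<Rightarrow> (forest \<times> forest) multiset" where
  "cop_forest F = comb (image_mset cop_tree F)"

definition hr_elem :: "(forest \<Rightarrow> rat) \<Rightarrow> bool" where
  "hr_elem x \<longleftrightarrow> finite {F. x F \<noteq> 0}"

definition hr_cop :: "(forest \<Rightarrow> rat) \<Rightarrow> (forest \<times> forest \<Rightarrow> rat)" where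
  "hr_cop x = (\<lambda>(A, B). \<Sum>F\<in>{F. x F \<noteq> 0}. x F * of_nat (count (cop_forest F) (A, B)))"

definition primitive :: "(forest \<Rightarrow> rat) \<Rightarrow> bool" where
  "primitive x \<longleftrightarrow> hr_elem x \<and>
     hr_cop x = (\<lambda>(A, B). (if B = {#} then x A else 0) + (if A = {#} then x B else 0))"

text \<open>Grafting all trees of the forest M on each vertex of t (one result per vertex).\<close>
primrec graft_tree :: "forest \<Rightarrow> rtree \<Rightarrow> rtree multiset" where
  "graft_tree M (Node ts) =
     {#Node (ts + M)#} +
     sum_mset (image_mset (\<lambda>(t, G). image_mset (\<lambda>t'. Node (ts - {#t#} + {#t'#})) G)
                (image_mset (\<lambda>t. (t, graft_tree M t)) ts))"

text \<open>The multiset of the forests N_v, v ranging over the vertices of N.\<close>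
definition graft_forest :: "forest \<Rightarrow> forest \<Rightarrow> forest multiset" where
  "graft_forest M N =
     sum_mset (image_mset (\<lambda>t. image_mset (\<lambda>t'. N - {#t#} + {#t'#}) (graft_tree M t)) N)"

definition top :: "(forest \<Rightarrow> rat) \<Rightarrow> (forest \<Rightarrow> rat) \<Rightarrow> (forest \<Rightarrow> rat)" where
  "top x y = (\<lambda>F. \<Sum>M\<in>{M. x M \<noteq> 0}. \<Sum>N\<in>{N. y N \<noteq> 0}.
      x M * y N * (if N = {#} then 0
                   else of_nat (count (graft_forest M N) F) / of_nat (fweight N)))"

text \<open>A decomposition of {a..b} as the list of its intervals [(i1,j1),...,(ik,jk)].\<close>
definition decomps :: "nat \<Rightarrow> nat \<Rightarrow> (nat \<times> nat) list set" where
  "decomps a b = {ds. ds \<noteq> [] \<and> fst (hd ds) = a \<and> snd (last ds) = b \<and>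
      (\<forall>r < length ds. fst (ds ! r) \<le> snd (ds ! r)) \<and>
      (\<forall>r. Suc r < length ds \<longrightarrow> fst (ds ! Suc r) = Suc (snd (ds ! r)))}"

text \<open>p_{ik,jk} top ... top p_{i1,j1}, bracketed to the left.\<close>
definition top_word :: "(nat \<Rightarrow> nat \<Rightarrow> forest \<Rightarrow> rat) \<Rightarrow> (nat \<times> nat) list \<Rightarrow> (forest \<Rightarrow> rat)" where
  "top_word p ds = (case rev ds of [] \<Rightarrow> (\<lambda>_. 0)
      | (a, b) # rest \<Rightarrow> foldl (\<lambda>acc (c, d). top acc (p c d)) (p a b) rest)"

definition Cp_coeff :: "(nat \<Rightarrow> nat \<Rightarrow> forest \<Rightarrow> rat) \<Rightarrow> nat \<Rightarrow> nat \<Rightarrow> (forest \<Rightarrow> rat)" where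
  "Cp_coeff p i j = (\<lambda>F. \<Sum>ds\<in>decomps (Suc j) i. top_word p ds F)"

text \<open>A Q-vector space 'v (scalar multiplication sc) with a linear map
 delta : 'v => H_R (x) 'v, where H_R (x) 'v is represented as finitely supported
 functions forest => 'v (H_R has the forests as basis).\<close>
definition left_comodule :: "(rat \<Rightarrow> 'v::ab_group_add \<Rightarrow> 'v) \<Rightarrow> ('v \<Rightarrow> forest \<Rightarrow> 'v) \<Rightarrow> bool" where
  "left_comodule sc delta \<longleftrightarrow>
     vector_space sc \<and>
     (\<forall>v. finite {F. delta v F \<noteq> 0}) \<and>
     (\<forall>v w. delta (v + w) = (\<lambda>F. delta v F + delta w F)) \<and>
     (\<forall>c v. delta (sc c v) = (\<lambda>F. sc c (delta v F))) \<and>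
     \<comment> \<open>coassociativity: (Delta_H (x) id) o delta = (id (x) delta) o delta\<close>
     (\<forall>v A B. (\<Sum>F\<in>{F. delta v F \<noteq> 0}. sc (of_nat (count (cop_forest F) (A, B))) (delta v F))
               = delta (delta v A) B) \<and>
     \<comment> \<open>counit: (epsilon (x) id) o delta = id\<close>
     (\<forall>v. delta v {#} = v)"

end

theory Submission
  imports Defs
begin

text \<open>Induction on the dimension: we build a basis b_0, b_1, ... on which the coaction has the
  shape of C_(p). Given b_0, ..., b_(m-1), take a forest F0 of maximal weight such that some
  coefficient \<delta>(v)_F0 lies outside their span; by coassociativity and the grading, all
  coefficients \<delta>(w)_F, F \<noteq> 1, of w = \<delta>(v)_F0 lie in that span, say
  \<delta>(w)_F = \<Sum>_j Y_j(F) b_j. Coassociativity then gives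
  \<Delta>Y_j = Y_j \<otimes> 1 + 1 \<otimes> Y_j + \<Sum>_l Y_l \<otimes> C_(l,j). For primitive q the coproduct
  satisfies \<Delta>(x \<top> q) = (x \<top> q) \<otimes> 1 + \<Sum> x' \<otimes> (x'' \<top> q), a consequence of the
  compatibility of the coproduct with grafting; hence p_(j+1,m) = Y_j - \<Sum>_l Y_l \<top> p_(j+1,l)
  is primitive, and the recursion C_(m,j) = p_(j+1,m) + \<Sum>_l C_(m,l) \<top> p_(j+1,l) of the
  coefficients of C_(p) returns C_(m,j) = Y_j.\<close>

definition pair_add :: "forest \<times> forest \<Rightarrow> forest \<times> forest \<Rightarrow> forest \<times> forest" where
  "pair_add a b = (fst a + fst b, snd a + snd b)"

lemma pair_add_commute: "pair_add a b = pair_add b a"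
  by (simp add: pair_add_def add.commute)

lemma pair_add_assoc: "pair_add (pair_add a b) c = pair_add a (pair_add b c)"
  by (simp add: pair_add_def add.assoc)

lemma pair_add_unit [simp]: "pair_add ({#}, {#}) = (\<lambda>a. a)" "pair_add a ({#}, {#}) = a"
  by (simp_all add: pair_add_def fun_eq_iff)

lemma pairprod_empty_left [simp]: "pairprod {#} B = {#}"
  by (simp add: pairprod_def)

lemma pairprod_add_mset_left: "pairprod (add_mset a A) B = image_mset (pair_add a) B + pairprod A B"
proof -
  obtain x y where a: "a = (x, y)" by (cases a)
  have "pair_add (x, y) = (\<lambda>(p2, r2). (x + p2, y + r2))" by (auto simp: fun_eq_iff pair_add_def)
  then show ?thesis by (simp add: a pairprod_def)
qed

lemma pairprod_union_left: "pairprod (A1 + A2) B = pairprod A1 B + pairprod A2 B"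
  by (simp add: pairprod_def)

lemma pairprod_empty_right [simp]: "pairprod A {#} = {#}"
  by (induction A) (simp_all add: pairprod_add_mset_left)

lemma pairprod_add_mset_right:
  "pairprod A (add_mset b B) = image_mset (\<lambda>a. pair_add a b) A + pairprod A B"
  by (induction A) (simp_all add: pairprod_add_mset_left)

lemma pairprod_commute: "pairprod A B = pairprod B A"
proof (induction A)
  case (add a A)
  have "pair_add a = (\<lambda>b. pair_add b a)" by (rule ext, rule pair_add_commute)
  then show ?case by (simp add: pairprod_add_mset_left pairprod_add_mset_right add)
qed simp

lemma pairprod_union_right: "pairprod A (B1 + B2) = pairprod A B1 + pairprod A B2"
  by (metis pairprod_commute pairprod_union_left)

lemma pairprod_singleton_left: "pairprod {#x#} Y = image_mset (pair_add x) Y"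
  by (simp add: pairprod_add_mset_left)

lemma pairprod_singleton_right: "pairprod X {#y#} = image_mset (\<lambda>x. pair_add x y) X"
  by (simp add: pairprod_add_mset_right)

lemma pairprod_image_pair_add:
  "pairprod (image_mset (pair_add a) B) C = image_mset (pair_add a) (pairprod B C)"
proof -
  have "pair_add (pair_add a x) = (\<lambda>c. pair_add a (pair_add x c))" for x
    by (rule ext, rule pair_add_assoc)
  then show ?thesis
    by (induction B) (simp_all add: pairprod_add_mset_left multiset.map_comp comp_def)
qed

lemma pairprod_assoc: "pairprod (pairprod A B) C = pairprod A (pairprod B C)"
  by (induction A) (simp_all add: pairprod_add_mset_left pairprod_union_left pairprod_image_pair_add)

lemma pairprod_unit [simp]: "pairprod {#({#}, {#})#} A = A" "pairprod A {#({#}, {#})#} = A"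
  by (simp_all add: pairprod_add_mset_left pairprod_add_mset_right)

lemma pairprod_eq_sum_mset: "pairprod X Y = (\<Sum>x\<in>#X. \<Sum>y\<in>#Y. {#pair_add x y#})"
  by (induction X) (simp_all add: pairprod_add_mset_left)

lemma pairprod_sum_mset_left: "pairprod (\<Sum>i\<in>#I. f i) Y = (\<Sum>i\<in>#I. pairprod (f i) Y)"
  by (induction I) (simp_all add: pairprod_union_left)

lemma pairprod_sum_mset_right: "pairprod X (\<Sum>i\<in>#I. f i) = (\<Sum>i\<in>#I. pairprod X (f i))"
  by (induction I) (simp_all add: pairprod_union_right)

lemma mem_pairprodI: "a \<in># A \<Longrightarrow> b \<in># B \<Longrightarrow> pair_add a b \<in># pairprod A B"
  by (induction A) (auto simp: pairprod_add_mset_left)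

lemma mem_pairprodE:
  assumes "z \<in># pairprod A B"
  obtains a b where "a \<in># A" "b \<in># B" "z = pair_add a b"
  using assms by (induction A) (auto simp: pairprod_add_mset_left)

lemma comp_fun_commute_pairprod: "comp_fun_commute pairprod"
proof
  show "pairprod y \<circ> pairprod x = pairprod x \<circ> pairprod y" for x y
    by (rule ext) (metis comp_apply pairprod_assoc pairprod_commute)
qed

lemma comb_empty [simp]: "comb {#} = {#({#}, {#})#}"
  by (simp add: comb_def)

lemma comb_add_mset [simp]: "comb (add_mset x X) = pairprod x (comb X)"
  by (simp add: comb_def comp_fun_commute.fold_mset_add_mset[OF comp_fun_commute_pairprod])

lemma comb_union: "comb (X + Y) = pairprod (comb X) (comb Y)"
  by (induction X) (simp_all add: pairprod_assoc)

lemma cop_forest_empty [simp]: "cop_forest {#} = {#({#}, {#})#}"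
  by (simp add: cop_forest_def)

lemma cop_forest_union: "cop_forest (A + B) = pairprod (cop_forest A) (cop_forest B)"
  by (simp add: cop_forest_def comb_union)

lemma cop_forest_add_mset: "cop_forest (add_mset t A) = pairprod (cop_tree t) (cop_forest A)"
  by (simp add: cop_forest_def)

lemma empty_cut_in_cuts: "({#}, t) \<in># cuts t"
proof (induction t)
  case (Node ts)
  let ?choice = "\<lambda>t. {#({#t#}, {#})#} + image_mset (\<lambda>(P, R). (P, {#R#})) (cuts t)"
  have "({#}, ts) \<in># comb (image_mset ?choice ts)"
    using Node
  proof (induction ts)
    case (add x ts)
    have "({#}, {#x#}) \<in># ?choice x" using add.prems by force
    moreover have "({#}, ts) \<in># comb (image_mset ?choice ts)" using add by auto
    ultimately have "pair_add ({#}, {#x#}) ({#}, ts) \<in># comb (image_mset ?choice (add_mset x ts))"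
      by (simp add: mem_pairprodI)
    then show ?case by (simp add: pair_add_def)
  qed simp
  then have "(\<lambda>(P, R). (P, Node R)) ({#}, ts)
      \<in># image_mset (\<lambda>(P, R). (P, Node R)) (comb (image_mset ?choice ts))"
    by (simp only: set_image_mset) (rule imageI)
  then show ?case by (simp add: cuts.simps)
qed

lemma cop_tree_eq_cuts: "cop_tree t = {#({#t#}, {#})#} + image_mset (\<lambda>(P, R). (P, {#R#})) (cuts t)"
proof -
  have "cuts t = adm_cuts t + {#({#}, t)#}"
    using empty_cut_in_cuts[of t] by (simp add: adm_cuts_def)
  then show ?thesis by (simp add: cop_tree_def)
qed

lemma cuts_Node_cop_forest: "cuts (Node ts) = image_mset (\<lambda>(P, R). (P, Node R)) (cop_forest ts)"
proof -
  have "(\<lambda>t. {#({#t#}, {#})#} + image_mset (\<lambda>(P, R). (P, {#R#})) (cuts t)) = cop_tree"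
    by (rule ext) (simp add: cop_tree_eq_cuts)
  then show ?thesis by (simp add: cop_forest_def)
qed

declare cuts.simps [simp del]

lemma weight_pos: "weight t > 0"
  by (cases t) simp

lemma fweight_empty [simp]: "fweight {#} = 0"
  and fweight_union [simp]: "fweight (A + B) = fweight A + fweight B"
  and fweight_add_mset [simp]: "fweight (add_mset t A) = weight t + fweight A"
  by (simp_all add: fweight_def)

lemma fweight_eq_0_iff: "fweight A = 0 \<longleftrightarrow> A = {#}"
  by (induction A) (auto simp: weight_pos)

definition homogeneous :: "(forest \<times> forest) multiset \<Rightarrow> nat \<Rightarrow> bool" where
  "homogeneous X n \<longleftrightarrow> (\<forall>z\<in>#X. fweight (fst z) + fweight (snd z) = n)"

lemma homogeneous_pairprod:
  "homogeneous X a \<Longrightarrow> homogeneous Y b \<Longrightarrow> homogeneous (pairprod X Y) (a + b)"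
  unfolding homogeneous_def by (fastforce simp: pair_add_def elim!: mem_pairprodE)

lemma homogeneous_cop_forest_of_trees:
  "(\<And>t. t \<in># N \<Longrightarrow> homogeneous (cop_tree t) (weight t)) \<Longrightarrow> homogeneous (cop_forest N) (fweight N)"
proof (induction N)
  case (add t N)
  then show ?case
    using homogeneous_pairprod[of "cop_tree t" "weight t" "cop_forest N" "fweight N"]
    by (simp add: cop_forest_add_mset)
qed (simp add: homogeneous_def)

lemma weight_cuts: "z \<in># cuts t \<Longrightarrow> fweight (fst z) + weight (snd z) = weight t"
proof (induction t arbitrary: z)
  case (Node ts)
  have "homogeneous (cop_tree t) (weight t)" if "t \<in># ts" for t
    using Node.IH that unfolding homogeneous_def cop_tree_eq_cuts by auto
  then have "homogeneous (cop_forest ts) (fweight ts)"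
    by (rule homogeneous_cop_forest_of_trees)
  then show ?case using Node.prems
    unfolding cuts_Node_cop_forest homogeneous_def by (auto simp: fweight_def)
qed

lemma homogeneous_cop_forest: "homogeneous (cop_forest N) (fweight N)"
  by (rule homogeneous_cop_forest_of_trees)
    (auto simp: homogeneous_def cop_tree_eq_cuts dest: weight_cuts)

lemma fweight_cop_forest: "z \<in># cop_forest N \<Longrightarrow> fweight (fst z) + fweight (snd z) = fweight N"
  using homogeneous_cop_forest unfolding homogeneous_def by auto

lemma image_mset_sum_mset: "image_mset f (sum_mset X) = (\<Sum>A\<in>#X. image_mset f A)"
  by (induction X) auto

lemma sum_mset_sum_mset: "sum_mset (\<Sum>x\<in>#X. f x) = (\<Sum>x\<in>#X. sum_mset (f x))"
  by (induction X) auto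

lemma graft_forest_empty [simp]: "graft_forest M {#} = {#}"
  by (simp add: graft_forest_def)

lemma graft_forest_union:
  "graft_forest M (N1 + N2) =
     image_mset (\<lambda>G. G + N2) (graft_forest M N1) + image_mset (\<lambda>G. N1 + G) (graft_forest M N2)"
proof -
  have 1: "image_mset (\<lambda>t. image_mset (\<lambda>t'. N1 + N2 - {#t#} + {#t'#}) (graft_tree M t)) N1 =
      image_mset (\<lambda>t. image_mset (\<lambda>G. G + N2) (image_mset (\<lambda>t'. N1 - {#t#} + {#t'#}) (graft_tree M t))) N1"
  proof (rule image_mset_cong)
    fix t assume "t \<in># N1"
    then have "N1 + N2 - {#t#} = N1 - {#t#} + N2"
      by (simp add: add.commute diff_union_single_conv)
    then show "image_mset (\<lambda>t'. N1 + N2 - {#t#} + {#t'#}) (graft_tree M t) =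
        image_mset (\<lambda>G. G + N2) (image_mset (\<lambda>t'. N1 - {#t#} + {#t'#}) (graft_tree M t))"
      by (simp add: multiset.map_comp comp_def add_ac)
  qed
  have 2: "image_mset (\<lambda>t. image_mset (\<lambda>t'. N1 + N2 - {#t#} + {#t'#}) (graft_tree M t)) N2 =
      image_mset (\<lambda>t. image_mset (\<lambda>G. N1 + G) (image_mset (\<lambda>t'. N2 - {#t#} + {#t'#}) (graft_tree M t))) N2"
  proof (rule image_mset_cong)
    fix t assume "t \<in># N2"
    then have "N1 + N2 - {#t#} = N1 + (N2 - {#t#})"
      by (rule diff_union_single_conv)
    then show "image_mset (\<lambda>t'. N1 + N2 - {#t#} + {#t'#}) (graft_tree M t) =
        image_mset (\<lambda>G. N1 + G) (image_mset (\<lambda>t'. N2 - {#t#} + {#t'#}) (graft_tree M t))"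
      by (simp add: multiset.map_comp comp_def add_ac)
  qed
  show ?thesis
    unfolding graft_forest_def image_mset_union sum_mset.union 1 2
    by (simp add: image_mset_sum_mset multiset.map_comp comp_def)
qed

lemma graft_forest_singleton: "graft_forest M {#t#} = image_mset (\<lambda>t'. {#t'#}) (graft_tree M t)"
  by (simp add: graft_forest_def)

lemma graft_tree_Node:
  "graft_tree M (Node ts) = add_mset (Node (ts + M)) (image_mset Node (graft_forest M ts))"
  by (simp add: graft_forest_def image_mset_sum_mset multiset.map_comp comp_def)

declare graft_tree.simps [simp del]

lemma replicate_mset_add: "replicate_mset (a + b) x = replicate_mset a x + replicate_mset b x"
  by (induction a) auto

lemma graft_empty_forest_of_trees:
  "(\<And>t. t \<in># N \<Longrightarrow> graft_tree {#} t = replicate_mset (weight t) t) \<Longrightarrow>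
    graft_forest {#} N = replicate_mset (fweight N) N"
proof (induction N)
  case (add t N)
  have "graft_forest {#} ({#t#} + N) =
      image_mset (\<lambda>G. G + N) (graft_forest {#} {#t#}) + image_mset (\<lambda>G. {#t#} + G) (graft_forest {#} N)"
    by (rule graft_forest_union)
  also have "\<dots> = replicate_mset (weight t) ({#t#} + N) + replicate_mset (fweight N) ({#t#} + N)"
    using add by (simp add: graft_forest_singleton)
  finally show ?case by (simp add: replicate_mset_add)
qed simp

lemma graft_empty_tree: "graft_tree {#} t = replicate_mset (weight t) t"
proof (induction t)
  case (Node ts)
  then have "graft_forest {#} ts = replicate_mset (fweight ts) ts"
    by (intro graft_empty_forest_of_trees) auto
  then show ?case by (simp add: graft_tree_Node fweight_def)
qed

lemma graft_empty_forest: "graft_forest {#} N = replicate_mset (fweight N) N"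
  by (rule graft_empty_forest_of_trees) (rule graft_empty_tree)

section \<open>The coproduct of a grafting\<close>

text \<open>In a term P \<otimes> R of the coproduct of a grafted forest, the grafting vertex lies either
  in the pruned part P, or in the trunk R; in the latter case the grafted forest M is itself
  split by an admissible cut, its pruned part M' joining P and its trunk M'' staying grafted.\<close>

definition graft_pair :: "forest \<Rightarrow> forest \<times> forest \<Rightarrow> (forest \<times> forest) multiset" where
  "graft_pair M z = image_mset (\<lambda>P'. (P', snd z)) (graft_forest M (fst z)) +
     (\<Sum>w\<in>#cop_forest M. image_mset (\<lambda>G. (fst w + fst z, G)) (graft_forest (snd w) (snd z)))"

definition graft_pairs :: "forest \<Rightarrow> (forest \<times> forest) multiset \<Rightarrow> (forest \<times> forest) multiset" where
  "graft_pairs M X = (\<Sum>z\<in>#X. graft_pair M z)"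

lemma graft_pair_pair_add:
  "graft_pair M (pair_add x y) = pairprod (graft_pair M x) {#y#} + pairprod {#x#} (graft_pair M y)"
proof -
  obtain P1 R1 where x: "x = (P1, R1)" by (cases x)
  obtain P2 R2 where y: "y = (P2, R2)" by (cases y)
  define S where "S R P = (\<Sum>w\<in>#cop_forest M. image_mset (\<lambda>G. (fst w + P, G)) (graft_forest (snd w) R))"
    for R P
  have L: "graft_pair M (pair_add x y) = image_mset (\<lambda>G. (G + P2, R1 + R2)) (graft_forest M P1)
      + image_mset (\<lambda>G. (P1 + G, R1 + R2)) (graft_forest M P2) + S (R1 + R2) (P1 + P2)"
    by (simp add: x y graft_pair_def pair_add_def S_def graft_forest_union multiset.map_comp comp_def)
  have S: "S (R1 + R2) (P1 + P2) =
        (\<Sum>w\<in>#cop_forest M. image_mset (\<lambda>G. (fst w + P1 + P2, G + R2)) (graft_forest (snd w) R1))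
      + (\<Sum>w\<in>#cop_forest M. image_mset (\<lambda>G. (P1 + (fst w + P2), R1 + G)) (graft_forest (snd w) R2))"
    unfolding S_def sum_mset.distrib[symmetric]
    by (rule arg_cong[where f = sum_mset], rule image_mset_cong)
      (simp add: graft_forest_union multiset.map_comp comp_def add_ac)
  have R1: "pairprod (graft_pair M x) {#y#} = image_mset (\<lambda>G. (G + P2, R1 + R2)) (graft_forest M P1)
     + (\<Sum>w\<in>#cop_forest M. image_mset (\<lambda>G. (fst w + P1 + P2, G + R2)) (graft_forest (snd w) R1))"
    by (simp add: pairprod_singleton_right x y graft_pair_def pair_add_def multiset.map_comp
        comp_def image_mset_sum_mset)
  have R2: "pairprod {#x#} (graft_pair M y) = image_mset (\<lambda>G. (P1 + G, R1 + R2)) (graft_forest M P2)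
     + (\<Sum>w\<in>#cop_forest M. image_mset (\<lambda>G. (P1 + (fst w + P2), R1 + G)) (graft_forest (snd w) R2))"
    by (simp add: pairprod_singleton_left x y graft_pair_def pair_add_def multiset.map_comp
        comp_def image_mset_sum_mset)
  show ?thesis unfolding L S R1 R2 by (simp only: add_ac)
qed

lemma graft_pairs_pairprod:
  "graft_pairs M (pairprod X Y) = pairprod (graft_pairs M X) Y + pairprod X (graft_pairs M Y)"
proof -
  have "graft_pairs M (pairprod X Y) = (\<Sum>x\<in>#X. \<Sum>y\<in>#Y. graft_pair M (pair_add x y))"
    by (simp add: pairprod_eq_sum_mset graft_pairs_def image_mset_sum_mset multiset.map_comp
        comp_def sum_mset_sum_mset)
  also have "\<dots> = (\<Sum>x\<in>#X. \<Sum>y\<in>#Y. pairprod (graft_pair M x) {#y#})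
      + (\<Sum>x\<in>#X. \<Sum>y\<in>#Y. pairprod {#x#} (graft_pair M y))"
    by (simp add: graft_pair_pair_add sum_mset.distrib)
  also have "(\<Sum>x\<in>#X. \<Sum>y\<in>#Y. pairprod (graft_pair M x) {#y#}) = pairprod (graft_pairs M X) Y"
    by (simp only: pairprod_sum_mset_right[symmetric] pairprod_sum_mset_left[symmetric]
        sum_mset_singleton_mset image_mset.identity id_apply graft_pairs_def)
  also have "(\<Sum>x\<in>#X. \<Sum>y\<in>#Y. pairprod {#x#} (graft_pair M y)) = pairprod X (graft_pairs M Y)"
    by (simp only: sum_mset.swap[of _ X] pairprod_sum_mset_right[symmetric]
        pairprod_sum_mset_left[symmetric] sum_mset_singleton_mset image_mset.identity id_apply graft_pairs_def)
  finally show ?thesis .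
qed

definition graft_cut :: "forest \<Rightarrow> forest \<times> rtree \<Rightarrow> (forest \<times> rtree) multiset" where
  "graft_cut M z = image_mset (\<lambda>P'. (P', snd z)) (graft_forest M (fst z)) +
     (\<Sum>w\<in>#cop_forest M. image_mset (\<lambda>R'. (fst w + fst z, R')) (graft_tree (snd w) (snd z)))"

definition graft_cuts :: "forest \<Rightarrow> (forest \<times> rtree) multiset \<Rightarrow> (forest \<times> rtree) multiset" where
  "graft_cuts M Y = (\<Sum>z\<in>#Y. graft_cut M z)"

lemma cop_graft_forest_of_trees:
  assumes "\<And>t. t \<in># N \<Longrightarrow> (\<Sum>t'\<in>#graft_tree M t. cop_tree t') = graft_pairs M (cop_tree t)"
  shows "(\<Sum>G\<in>#graft_forest M N. cop_forest G) = graft_pairs M (cop_forest N)"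
  using assms
proof (induction N)
  case (add t N)
  have IH: "(\<Sum>G\<in>#graft_forest M N. cop_forest G) = graft_pairs M (cop_forest N)"
    using add by auto
  have T: "(\<Sum>t'\<in>#graft_tree M t. cop_tree t') = graft_pairs M (cop_tree t)"
    using add by auto
  have "add_mset t N = {#t#} + N" by simp
  then have "(\<Sum>G\<in>#graft_forest M (add_mset t N). cop_forest G) =
      (\<Sum>G\<in>#graft_forest M {#t#}. cop_forest (G + N)) + (\<Sum>G\<in>#graft_forest M N. cop_forest ({#t#} + G))"
    by (simp only: graft_forest_union image_mset_union sum_mset.union multiset.map_comp comp_def)
  also have "(\<Sum>G\<in>#graft_forest M {#t#}. cop_forest (G + N)) =
      pairprod (graft_pairs M (cop_tree t)) (cop_forest N)"
    by (simp add: graft_forest_singleton multiset.map_comp comp_def cop_forest_add_mset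
        T[symmetric] pairprod_sum_mset_left)
  also have "(\<Sum>G\<in>#graft_forest M N. cop_forest ({#t#} + G)) =
      pairprod (cop_tree t) (graft_pairs M (cop_forest N))"
    by (simp add: cop_forest_add_mset IH[symmetric] pairprod_sum_mset_right)
  finally show ?case by (simp add: cop_forest_add_mset graft_pairs_pairprod)
qed (simp add: graft_pairs_def graft_pair_def)

lemma cop_graft_tree_of_cuts:
  assumes "(\<Sum>t'\<in>#graft_tree M t. cuts t') = graft_cuts M (cuts t)"
  shows "(\<Sum>t'\<in>#graft_tree M t. cop_tree t') = graft_pairs M (cop_tree t)"
proof -
  let ?i = "\<lambda>(P, R). (P, {#R#})"
  have "(\<Sum>t'\<in>#graft_tree M t. cop_tree t') =
      image_mset (\<lambda>t'. ({#t'#}, {#})) (graft_tree M t) + image_mset ?i (\<Sum>t'\<in>#graft_tree M t. cuts t')"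
    by (simp only: cop_tree_eq_cuts sum_mset.distrib sum_mset_singleton_mset image_mset_sum_mset
        multiset.map_comp comp_def)
  also have "\<dots> = image_mset (\<lambda>t'. ({#t'#}, {#})) (graft_tree M t) + image_mset ?i (graft_cuts M (cuts t))"
    by (simp only: assms)
  also have "\<dots> = graft_pair M ({#t#}, {#}) + (\<Sum>z\<in>#cuts t. graft_pair M (?i z))"
  proof -
    have "graft_pair M (?i z) = image_mset ?i (graft_cut M z)" for z
      by (cases z) (simp add: graft_pair_def graft_cut_def graft_forest_singleton
          multiset.map_comp comp_def image_mset_sum_mset)
    then show ?thesis
      by (simp add: graft_pair_def graft_forest_singleton graft_cuts_def multiset.map_comp comp_def
          image_mset_sum_mset)
  qed
  also have "\<dots> = graft_pairs M (cop_tree t)"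
    by (simp add: cop_tree_eq_cuts graft_pairs_def multiset.map_comp comp_def)
  finally show ?thesis .
qed

lemma cuts_graft_Node_of_forest:
  assumes "(\<Sum>G\<in>#graft_forest M ts. cop_forest G) = graft_pairs M (cop_forest ts)"
  shows "(\<Sum>t'\<in>#graft_tree M (Node ts). cuts t') = graft_cuts M (cuts (Node ts))"
proof -
  let ?n = "\<lambda>(P, R). (P, Node R)"
  have graft_cut_Node: "graft_cut M (?n z) = image_mset ?n (graft_pair M z) +
      (\<Sum>w\<in>#cop_forest M. {#(fst w + fst z, Node (snd z + snd w))#})" for z
  proof -
    obtain P R where z: "z = (P, R)" by (cases z)
    have "(\<Sum>w\<in>#cop_forest M. image_mset (\<lambda>R'. (fst w + P, R')) (graft_tree (snd w) (Node R)))
       = (\<Sum>w\<in>#cop_forest M. {#(fst w + P, Node (R + snd w))#} +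
           image_mset ?n (image_mset (\<lambda>G. (fst w + P, G)) (graft_forest (snd w) R)))"
      by (rule arg_cong[of _ _ sum_mset], rule image_mset_cong)
        (simp add: graft_tree_Node multiset.map_comp comp_def)
    then have "(\<Sum>w\<in>#cop_forest M. image_mset (\<lambda>R'. (fst w + P, R')) (graft_tree (snd w) (Node R)))
       = (\<Sum>w\<in>#cop_forest M. {#(fst w + P, Node (R + snd w))#}) +
         (\<Sum>w\<in>#cop_forest M. image_mset ?n (image_mset (\<lambda>G. (fst w + P, G)) (graft_forest (snd w) R)))"
      by (simp only: sum_mset.distrib)
    then show ?thesis
      by (simp add: z graft_cut_def graft_pair_def multiset.map_comp comp_def image_mset_sum_mset
          add_ac)
  qed
  have "(\<Sum>t'\<in>#graft_tree M (Node ts). cuts t') =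
      image_mset ?n (pairprod (cop_forest ts) (cop_forest M))
      + image_mset ?n (\<Sum>G\<in>#graft_forest M ts. cop_forest G)"
    by (simp add: graft_tree_Node cuts_Node_cop_forest cop_forest_union multiset.map_comp comp_def
        image_mset_sum_mset)
  also have "\<dots> = image_mset ?n (pairprod (cop_forest ts) (cop_forest M))
      + image_mset ?n (graft_pairs M (cop_forest ts))"
    by (simp only: assms)
  also have "\<dots> = (\<Sum>z\<in>#cop_forest ts. graft_cut M (?n z))"
    unfolding graft_cut_Node sum_mset.distrib
    by (simp add: graft_pairs_def pairprod_eq_sum_mset image_mset_sum_mset multiset.map_comp
        comp_def pair_add_def add_ac)
  also have "\<dots> = graft_cuts M (cuts (Node ts))"
    by (simp add: graft_cuts_def cuts_Node_cop_forest multiset.map_comp comp_def)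
  finally show ?thesis .
qed

lemma cuts_graft_tree: "(\<Sum>t'\<in>#graft_tree M t. cuts t') = graft_cuts M (cuts t)"
proof (induction t)
  case (Node ts)
  then have "(\<Sum>t'\<in>#graft_tree M t. cop_tree t') = graft_pairs M (cop_tree t)" if "t \<in># ts" for t
    using that by (intro cop_graft_tree_of_cuts) auto
  then show ?case by (intro cuts_graft_Node_of_forest cop_graft_forest_of_trees)
qed

theorem cop_graft_forest: "(\<Sum>G\<in>#graft_forest M N. cop_forest G) = graft_pairs M (cop_forest N)"
  by (intro cop_graft_forest_of_trees cop_graft_tree_of_cuts cuts_graft_tree)

lemma sum_mset_eq_sum_count:
  fixes g :: "'a \<Rightarrow> 'b::comm_semiring_1"
  assumes "finite W" "set_mset X \<subseteq> W"
  shows "(\<Sum>w\<in>#X. g w) = (\<Sum>w\<in>W. of_nat (count X w) * g w)"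
  using assms(2)
proof (induction X)
  case (add x X)
  then have x: "x \<in> W" and X: "set_mset X \<subseteq> W" by auto
  have "(\<Sum>w\<in>W. of_nat (count (add_mset x X) w) * g w) =
      (\<Sum>w\<in>W. of_nat (count X w) * g w) + (\<Sum>w\<in>W. if w = x then g w else 0)"
    by (simp add: sum.distrib[symmetric], rule sum.cong) (auto simp: algebra_simps)
  also have "(\<Sum>w\<in>W. if w = x then g w else 0) = g x"
    using x assms(1) by (simp add: sum.delta')
  finally show ?case using add X by (simp add: add.commute)
qed simp

lemma count_sum_mset: "count (sum_mset XS) a = (\<Sum>X\<in>#XS. count X a)"
  by (induction XS) auto

definition hr_supp :: "(forest \<Rightarrow> rat) \<Rightarrow> forest set" where
  "hr_supp x = {F. x F \<noteq> 0}"

lemma hr_elem_iff_finite_supp: "hr_elem x \<longleftrightarrow> finite (hr_supp x)"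
  by (simp add: hr_elem_def hr_supp_def)

lemma sum_hr_supp:
  assumes "finite S" "hr_supp x \<subseteq> S"
  shows "(\<Sum>F\<in>{F. x F \<noteq> 0}. x F * g F) = (\<Sum>F\<in>S. x F * g F)"
  using assms by (intro sum.mono_neutral_left) (auto simp: hr_supp_def)

lemma hr_cop_eq_sum:
  assumes "finite S" "hr_supp x \<subseteq> S"
  shows "hr_cop x (A, B) = (\<Sum>F\<in>S. x F * of_nat (count (cop_forest F) (A, B)))"
  unfolding hr_cop_def using sum_hr_supp[OF assms] by simp

lemma hr_supp_lin: "hr_supp (\<lambda>F. \<Sum>d\<in>D. c d * f d F) \<subseteq> (\<Union>d\<in>D. hr_supp (f d))"
  by (auto simp: hr_supp_def elim!: sum.not_neutral_contains_not_neutral)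

lemma hr_elem_lin:
  "finite D \<Longrightarrow> (\<And>d. d \<in> D \<Longrightarrow> hr_elem (f d)) \<Longrightarrow> hr_elem (\<lambda>F. \<Sum>d\<in>D. c d * f d F)"
  unfolding hr_elem_iff_finite_supp by (rule finite_subset[OF hr_supp_lin]) auto

lemma hr_elem_sum:
  "finite D \<Longrightarrow> (\<And>d. d \<in> D \<Longrightarrow> hr_elem (f d)) \<Longrightarrow> hr_elem (\<lambda>F. \<Sum>d\<in>D. f d F)"
  using hr_elem_lin[of D f "\<lambda>_. 1"] by simp

lemma hr_elem_add: "hr_elem a \<Longrightarrow> hr_elem b \<Longrightarrow> hr_elem (\<lambda>F. a F + b F)"
  unfolding hr_elem_iff_finite_supp
  by (rule finite_subset[of _ "hr_supp a \<union> hr_supp b"]) (auto simp: hr_supp_def)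

lemma hr_elem_smult: "hr_elem a \<Longrightarrow> hr_elem (\<lambda>F. c * a F)"
  unfolding hr_elem_iff_finite_supp by (rule finite_subset[of _ "hr_supp a"]) (auto simp: hr_supp_def)

lemma hr_elem_diff_sum:
  assumes "hr_elem a" "finite D" "\<And>d. d \<in> D \<Longrightarrow> hr_elem (b d)"
  shows "hr_elem (\<lambda>F. a F - (\<Sum>d\<in>D. b d F))"
proof -
  have "hr_elem (\<lambda>F. a F + (-1) * (\<Sum>d\<in>D. b d F))"
    by (intro hr_elem_add hr_elem_smult hr_elem_sum assms)
  then show ?thesis by simp
qed

lemma hr_cop_diff_sum:
  assumes a: "hr_elem a" and D: "finite D" and b: "\<And>d. d \<in> D \<Longrightarrow> hr_elem (b d)"
  shows "hr_cop (\<lambda>F. a F - (\<Sum>d\<in>D. b d F)) (A, B) = hr_cop a (A, B) - (\<Sum>d\<in>D. hr_cop (b d) (A, B))"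
proof -
  define S where "S = hr_supp a \<union> (\<Union>d\<in>D. hr_supp (b d))"
  have fS: "finite S" using a D b by (simp add: S_def hr_elem_iff_finite_supp)
  have "hr_supp (\<lambda>F. a F - (\<Sum>d\<in>D. b d F)) \<subseteq> S"
    by (auto simp: S_def hr_supp_def elim!: sum.not_neutral_contains_not_neutral)
  then have "hr_cop (\<lambda>F. a F - (\<Sum>d\<in>D. b d F)) (A, B) =
      (\<Sum>F\<in>S. (a F - (\<Sum>d\<in>D. b d F)) * of_nat (count (cop_forest F) (A, B)))"
    by (rule hr_cop_eq_sum[OF fS])
  also have "\<dots> = (\<Sum>F\<in>S. a F * of_nat (count (cop_forest F) (A, B)))
      - (\<Sum>d\<in>D. \<Sum>F\<in>S. b d F * of_nat (count (cop_forest F) (A, B)))"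
    by (simp add: left_diff_distrib sum_subtractf sum_distrib_right, rule sum.swap)
  also have "\<dots> = hr_cop a (A, B) - (\<Sum>d\<in>D. hr_cop (b d) (A, B))"
  proof -
    have "hr_cop (b d) (A, B) = (\<Sum>F\<in>S. b d F * of_nat (count (cop_forest F) (A, B)))"
      if "d \<in> D" for d
      using that by (intro hr_cop_eq_sum[OF fS]) (auto simp: S_def)
    moreover have "hr_cop a (A, B) = (\<Sum>F\<in>S. a F * of_nat (count (cop_forest F) (A, B)))"
      by (rule hr_cop_eq_sum[OF fS]) (simp add: S_def)
    ultimately show ?thesis by simp
  qed
  finally show ?thesis .
qed

definition hr_one :: "forest \<Rightarrow> rat" where
  "hr_one F = (if F = {#} then 1 else 0)"

lemma hr_elem_hr_one: "hr_elem hr_one"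
  unfolding hr_elem_iff_finite_supp
  by (rule finite_subset[of _ "{{#}}"]) (auto simp: hr_supp_def hr_one_def)

definition graft_coeff :: "forest \<Rightarrow> forest \<Rightarrow> forest \<Rightarrow> rat" where
  "graft_coeff M N F = of_nat (count (graft_forest M N) F) / of_nat (fweight N)"

lemma top_eq_sum:
  assumes "finite S" "hr_supp x \<subseteq> S" "finite T" "hr_supp y \<subseteq> T"
  shows "top x y F = (\<Sum>M\<in>S. \<Sum>N\<in>T. x M * y N * graft_coeff M N F)"
proof -
  have "(if N = {#} then 0 else of_nat (count (graft_forest M N) F) / of_nat (fweight N)) =
      graft_coeff M N F" for M N
    by (simp add: graft_coeff_def)
  then have "top x y F =
      (\<Sum>M\<in>{M. x M \<noteq> 0}. x M * (\<Sum>N\<in>{N. y N \<noteq> 0}. y N * graft_coeff M N F))"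
    by (simp add: top_def sum_distrib_left mult.assoc)
  also have "\<dots> = (\<Sum>M\<in>S. x M * (\<Sum>N\<in>T. y N * graft_coeff M N F))"
    by (simp add: sum_hr_supp[OF assms(3,4)] sum_hr_supp[OF assms(1,2)])
  finally show ?thesis by (simp add: sum_distrib_left mult.assoc)
qed

lemma hr_supp_top:
  "hr_supp (top x y) \<subseteq> (\<Union>M\<in>hr_supp x. \<Union>N\<in>hr_supp y. set_mset (graft_forest M N))"
proof
  fix F assume "F \<in> hr_supp (top x y)"
  then obtain M N where "x M \<noteq> 0" "y N \<noteq> 0" "count (graft_forest M N) F \<noteq> 0"
    unfolding top_def hr_supp_def
    by (auto elim!: sum.not_neutral_contains_not_neutral split: if_splits)
  then show "F \<in> (\<Union>M\<in>hr_supp x. \<Union>N\<in>hr_supp y. set_mset (graft_forest M N))"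
    by (auto simp: hr_supp_def)
qed

lemma hr_elem_top: "hr_elem x \<Longrightarrow> hr_elem y \<Longrightarrow> hr_elem (top x y)"
  unfolding hr_elem_iff_finite_supp by (rule finite_subset[OF hr_supp_top]) simp

lemma sum_rotate3: "(\<Sum>a\<in>A. \<Sum>b\<in>B. \<Sum>c\<in>C. f a b c) = (\<Sum>c\<in>C. \<Sum>b\<in>B. \<Sum>a\<in>A. f a b c)"
proof -
  have "(\<Sum>a\<in>A. \<Sum>b\<in>B. \<Sum>c\<in>C. f a b c) = (\<Sum>a\<in>A. \<Sum>c\<in>C. \<Sum>b\<in>B. f a b c)"
    by (rule sum.cong[OF refl], rule sum.swap)
  also have "\<dots> = (\<Sum>c\<in>C. \<Sum>a\<in>A. \<Sum>b\<in>B. f a b c)"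
    by (rule sum.swap)
  also have "\<dots> = (\<Sum>c\<in>C. \<Sum>b\<in>B. \<Sum>a\<in>A. f a b c)"
    by (rule sum.cong[OF refl], rule sum.swap)
  finally show ?thesis .
qed

lemma top_lin_left:
  assumes D: "finite D" and f: "\<And>d. d \<in> D \<Longrightarrow> hr_elem (f d)" and y: "hr_elem y"
  shows "top (\<lambda>F. \<Sum>d\<in>D. c d * f d F) y G = (\<Sum>d\<in>D. c d * top (f d) y G)"
proof -
  define S where "S = (\<Union>d\<in>D. hr_supp (f d))"
  have fS: "finite S" using D f by (simp add: S_def hr_elem_iff_finite_supp)
  have fT: "finite (hr_supp y)" using y by (simp add: hr_elem_iff_finite_supp)
  have "top (\<lambda>F. \<Sum>d\<in>D. c d * f d F) y G =
      (\<Sum>M\<in>S. \<Sum>N\<in>hr_supp y. (\<Sum>d\<in>D. c d * f d M) * y N * graft_coeff M N G)"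
    by (rule top_eq_sum[OF fS _ fT]) (simp_all add: S_def hr_supp_lin)
  also have "\<dots> = (\<Sum>M\<in>S. \<Sum>N\<in>hr_supp y. \<Sum>d\<in>D. c d * (f d M * y N * graft_coeff M N G))"
    by (simp add: sum_distrib_left sum_distrib_right mult_ac)
  also have "\<dots> = (\<Sum>d\<in>D. \<Sum>N\<in>hr_supp y. \<Sum>M\<in>S. c d * (f d M * y N * graft_coeff M N G))"
    by (rule sum_rotate3)
  also have "\<dots> = (\<Sum>d\<in>D. c d * (\<Sum>M\<in>S. \<Sum>N\<in>hr_supp y. f d M * y N * graft_coeff M N G))"
    by (simp add: sum_distrib_left, rule sum.cong[OF refl], rule sum.swap)
  also have "\<dots> = (\<Sum>d\<in>D. c d * top (f d) y G)"
    by (rule sum.cong[OF refl], subst top_eq_sum[OF fS _ fT]) (auto simp: S_def)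
  finally show ?thesis .
qed

lemma top_sum_left:
  assumes "finite D" "\<And>d. d \<in> D \<Longrightarrow> hr_elem (f d)" "hr_elem y"
  shows "top (\<lambda>F. \<Sum>d\<in>D. f d F) y G = (\<Sum>d\<in>D. top (f d) y G)"
  using top_lin_left[OF assms, where c = "\<lambda>_. 1"] by simp

lemma top_add_left:
  assumes "hr_elem a" "hr_elem b" "hr_elem y"
  shows "top (\<lambda>F. a F + b F) y G = top a y G + top b y G"
  using top_sum_left[of "{True, False}" "\<lambda>d. if d then a else b" y G] assms by simp

lemma top_smult_left:
  assumes "hr_elem a" "hr_elem y"
  shows "top (\<lambda>F. c * a F) y G = c * top a y G"
  using top_lin_left[of "{()}" "\<lambda>_. a" y "\<lambda>_. c" G] assms by simp

lemma top_hr_one_left: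
  assumes y: "hr_elem y" and y0: "y {#} = 0"
  shows "top hr_one y = y"
proof
  fix G
  have fT: "finite (hr_supp y)" using y by (simp add: hr_elem_iff_finite_supp)
  have "top hr_one y G = (\<Sum>M\<in>{{#}}. \<Sum>N\<in>hr_supp y. hr_one M * y N * graft_coeff M N G)"
    by (rule top_eq_sum) (use fT in \<open>auto simp: hr_supp_def hr_one_def\<close>)
  also have "\<dots> = (\<Sum>N\<in>hr_supp y. hr_one {#} * y N * graft_coeff {#} N G)"
    by simp
  also have "\<dots> = (\<Sum>N\<in>hr_supp y. if N = G then y N else 0)"
    by (rule sum.cong[OF refl])
      (auto simp: hr_one_def graft_coeff_def graft_empty_forest fweight_eq_0_iff y0 hr_supp_def)
  also have "\<dots> = y G" using fT by (simp add: sum.delta' hr_supp_def)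
  finally show "top hr_one y G = y G" .
qed

section \<open>Primitive elements\<close>

lemma count_cop_forest_unit: "count (cop_forest F) ({#}, {#}) = (if F = {#} then 1 else 0)"
proof (cases "F = {#}")
  case False
  then have "({#}, {#}) \<notin># cop_forest F"
    using fweight_cop_forest[of "({#}, {#})" F] by (auto simp: fweight_eq_0_iff)
  then show ?thesis using False by (simp add: count_eq_zero_iff)
qed simp

lemma primitive_hr_elem: "primitive q \<Longrightarrow> hr_elem q"
  by (simp add: primitive_def)

lemma primitive_hr_cop:
  "primitive q \<Longrightarrow> hr_cop q (A, B) = (if B = {#} then q A else 0) + (if A = {#} then q B else 0)"
  unfolding primitive_def by simp

lemma primitive_empty:
  assumes "primitive q"
  shows "q {#} = 0"
proof -
  have f: "finite (hr_supp q)" using primitive_hr_elem[OF assms] by (simp add: hr_elem_iff_finite_supp)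
  have "hr_cop q ({#}, {#}) =
      (\<Sum>F\<in>insert {#} (hr_supp q). q F * of_nat (count (cop_forest F) ({#}, {#})))"
    by (rule hr_cop_eq_sum) (use f in auto)
  also have "\<dots> = (\<Sum>F\<in>insert {#} (hr_supp q). if F = {#} then q F else 0)"
    by (rule sum.cong) (auto simp: count_cop_forest_unit)
  also have "\<dots> = q {#}"
    using f by (simp add: sum.delta)
  finally show ?thesis using primitive_hr_cop[OF assms, of "{#}" "{#}"] by simp
qed

lemma sum_cop_forest_eq_hr_cop:
  assumes "finite W" "\<And>N. N \<in> hr_supp x \<Longrightarrow> set_mset (cop_forest N) \<subseteq> W" "hr_elem x"
  shows "(\<Sum>N\<in>hr_supp x. x N * (\<Sum>z\<in>#cop_forest N. \<psi> z)) = (\<Sum>z\<in>W. \<psi> z * hr_cop x z)"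
proof -
  have "(\<Sum>N\<in>hr_supp x. x N * (\<Sum>z\<in>#cop_forest N. \<psi> z)) =
      (\<Sum>N\<in>hr_supp x. x N * (\<Sum>z\<in>W. of_nat (count (cop_forest N) z) * \<psi> z))"
    by (rule sum.cong) (simp_all add: sum_mset_eq_sum_count[OF assms(1,2)])
  also have "\<dots> = (\<Sum>z\<in>W. \<psi> z * (\<Sum>N\<in>hr_supp x. x N * of_nat (count (cop_forest N) z)))"
    unfolding sum_distrib_left by (subst sum.swap) (simp add: mult_ac)
  also have "\<dots> = (\<Sum>z\<in>W. \<psi> z * hr_cop x z)"
    by (rule sum.cong) (auto simp: hr_cop_def hr_supp_def case_prod_beta)
  finally show ?thesis .
qed

lemma primitive_pairing:
  assumes q: "primitive q"
  shows "(\<Sum>N\<in>hr_supp q. q N * (\<Sum>z\<in>#cop_forest N. \<psi> z)) =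
    (\<Sum>N\<in>hr_supp q. q N * (\<psi> (N, {#}) + \<psi> ({#}, N)))"
proof -
  define S where "S = hr_supp q"
  have fS: "finite S" using primitive_hr_elem[OF q] by (simp add: hr_elem_iff_finite_supp S_def)
  define U where "U = insert {#} (S \<union> (\<Union>N\<in>S. fst ` set_mset (cop_forest N) \<union> snd ` set_mset (cop_forest N)))"
  have fU: "finite U" and "{#} \<in> U" and "S \<subseteq> U" using fS by (auto simp: U_def)
  have "set_mset (cop_forest N) \<subseteq> U \<times> U" if "N \<in> S" for N
    using that by (force simp: U_def)
  then have "(\<Sum>N\<in>S. q N * (\<Sum>z\<in>#cop_forest N. \<psi> z)) = (\<Sum>z\<in>U \<times> U. \<psi> z * hr_cop q z)"
    using fU primitive_hr_elem[OF q] unfolding S_def by (intro sum_cop_forest_eq_hr_cop) auto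
  also have "\<dots> = (\<Sum>z\<in>U \<times> U. (if snd z = {#} then \<psi> z * q (fst z) else 0)
      + (if fst z = {#} then \<psi> z * q (snd z) else 0))"
    by (rule sum.cong) (auto simp: primitive_hr_cop[OF q] distrib_left)
  also have "\<dots> = (\<Sum>P\<in>U. \<Sum>R\<in>U. (if R = {#} then \<psi> (P, R) * q P else 0)
      + (if P = {#} then \<psi> (P, R) * q R else 0))"
    by (simp add: sum.cartesian_product case_prod_beta) (rule sum.cong, auto)
  also have "\<dots> = (\<Sum>P\<in>U. \<psi> (P, {#}) * q P) + (\<Sum>R\<in>U. \<psi> ({#}, R) * q R)"
  proof -
    have "(\<Sum>P\<in>U. \<Sum>R\<in>U. if P = {#} then \<psi> (P, R) * q R else 0) =
        (\<Sum>P\<in>U. if P = {#} then (\<Sum>R\<in>U. \<psi> (P, R) * q R) else 0)"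
      by (rule sum.cong) auto
    then show ?thesis using fU \<open>{#} \<in> U\<close> by (simp add: sum.distrib sum.delta')
  qed
  also have "\<dots> = (\<Sum>N\<in>U. q N * (\<psi> (N, {#}) + \<psi> ({#}, N)))"
    by (simp add: sum.distrib[symmetric] algebra_simps)
  also have "\<dots> = (\<Sum>N\<in>S. q N * (\<psi> (N, {#}) + \<psi> ({#}, N)))"
    by (rule sum.mono_neutral_right[OF fU \<open>S \<subseteq> U\<close>]) (auto simp: S_def hr_supp_def)
  finally show ?thesis by (simp add: S_def)
qed

lemma sum_mset_divide: "(\<Sum>x\<in>#X. f x) / (c :: 'a :: field) = (\<Sum>x\<in>#X. f x / c)"
  by (induction X) (simp_all add: add_divide_distrib)

text \<open>By homogeneity, dividing by the weight of N amounts to dividing each term of the coproduct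
  of N by its total weight, so the pairing above also applies to the weighted sums occurring in top.\<close>

lemma primitive_pairing_weighted:
  assumes "primitive q"
  shows "(\<Sum>N\<in>hr_supp q. q N * ((\<Sum>z\<in>#cop_forest N. \<phi> z) / of_nat (fweight N))) =
    (\<Sum>N\<in>hr_supp q. q N * ((\<phi> (N, {#}) + \<phi> ({#}, N)) / of_nat (fweight N)))"
proof -
  define \<psi> where "\<psi> z = \<phi> z / of_nat (fweight (fst z) + fweight (snd z))" for z
  have "(\<Sum>z\<in>#cop_forest N. \<phi> z) / of_nat (fweight N) = (\<Sum>z\<in>#cop_forest N. \<psi> z)" for N
    unfolding sum_mset_divide by (rule arg_cong[of _ _ sum_mset], rule image_mset_cong)
      (simp add: \<psi>_def fweight_cop_forest)
  moreover have "(\<phi> (N, {#}) + \<phi> ({#}, N)) / of_nat (fweight N) = \<psi> (N, {#}) + \<psi> ({#}, N)" for N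
    by (simp add: \<psi>_def add_divide_distrib)
  ultimately show ?thesis using primitive_pairing[OF assms, of \<psi>] by simp
qed

lemma count_image_pair_left:
  "count (image_mset (\<lambda>P. (P, c)) X) (A, B) = (if B = c then count X A else 0)"
  by (induction X) auto

lemma count_image_pair_right: "count (image_mset (Pair c) X) (A, B) = (if c = A then count X B else 0)"
  by (induction X) auto

lemma count_graft_pair_left:
  "count (graft_pair M (N, {#})) (A, B) = (if B = {#} then count (graft_forest M N) A else 0)"
  by (simp add: graft_pair_def count_image_pair_left)

lemma count_graft_pair_right:
  "count (graft_pair M ({#}, N)) (A, B) =
    (\<Sum>w\<in>#cop_forest M. if fst w = A then count (graft_forest (snd w) N) B else 0)"
proof -
  have "image_mset (\<lambda>G. (fst w, G)) X = image_mset (Pair (fst w)) X" for w and X :: "forest multiset"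
    by simp
  then show ?thesis
    by (simp add: graft_pair_def count_sum_mset multiset.map_comp comp_def count_image_pair_right)
qed

lemma sum_mset_fst_eq:
  fixes h :: "forest \<Rightarrow> rat"
  assumes "finite S" "snd ` set_mset X \<subseteq> S"
  shows "(\<Sum>w\<in>#X. if fst w = A then h (snd w) else 0) = (\<Sum>m\<in>S. of_nat (count X (A, m)) * h m)"
  using assms(2)
proof (induction X)
  case (add x X)
  then have x: "snd x \<in> S" and X: "snd ` set_mset X \<subseteq> S" by auto
  have "(\<Sum>m\<in>S. of_nat (count (add_mset x X) (A, m)) * h m) =
      (\<Sum>m\<in>S. of_nat (count X (A, m)) * h m) + (\<Sum>m\<in>S. if m = snd x then (if fst x = A then h m else 0) else 0)"
    by (simp add: sum.distrib[symmetric], rule sum.cong) (auto simp: algebra_simps)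
  also have "(\<Sum>m\<in>S. if m = snd x then (if fst x = A then h m else 0) else 0) =
      (if fst x = A then h (snd x) else 0)"
    using x assms(1) by (simp add: sum.delta')
  finally show ?case using add X by (simp add: add.commute)
qed simp

lemma hr_cop_top:
  assumes x: "hr_elem x" and y: "hr_elem y"
  shows "hr_cop (top x y) (A, B) = (\<Sum>M\<in>hr_supp x. x M * (\<Sum>N\<in>hr_supp y. y N *
      ((\<Sum>z\<in>#cop_forest N. of_nat (count (graft_pair M z) (A, B))) / of_nat (fweight N))))"
proof -
  define SX SY where "SX = hr_supp x" and "SY = hr_supp y"
  define SG where "SG = (\<Union>M\<in>SX. \<Union>N\<in>SY. set_mset (graft_forest M N))"
  have fSX: "finite SX" and fSY: "finite SY"
    using x y by (simp_all add: SX_def SY_def hr_elem_iff_finite_supp)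
  then have fSG: "finite SG" by (simp add: SG_def)
  define c where "c G = (of_nat (count (cop_forest G) (A, B)) :: rat)" for G
  have "hr_cop (top x y) (A, B) = (\<Sum>G\<in>SG. top x y G * c G)"
    unfolding c_def SG_def SX_def SY_def by (rule hr_cop_eq_sum[OF fSG[unfolded SG_def SX_def SY_def] hr_supp_top])
  also have "\<dots> = (\<Sum>G\<in>SG. (\<Sum>M\<in>SX. \<Sum>N\<in>SY. x M * y N * graft_coeff M N G) * c G)"
    by (simp add: top_eq_sum[OF fSX _ fSY] SX_def SY_def)
  also have "\<dots> = (\<Sum>M\<in>SX. x M * (\<Sum>N\<in>SY. y N * (\<Sum>G\<in>SG. graft_coeff M N G * c G)))"
    unfolding sum_distrib_right sum_distrib_left
    by (subst sum.swap, rule sum.cong, simp, subst sum.swap, simp add: mult_ac)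
  also have "\<dots> = (\<Sum>M\<in>SX. x M * (\<Sum>N\<in>SY. y N *
      ((\<Sum>z\<in>#cop_forest N. of_nat (count (graft_pair M z) (A, B))) / of_nat (fweight N))))"
  proof (intro sum.cong refl arg_cong[where f = "\<lambda>u. x _ * u"] arg_cong[where f = "\<lambda>u. y _ * u"])
    fix M N assume "M \<in> SX" "N \<in> SY"
    then have sub: "set_mset (graft_forest M N) \<subseteq> SG" by (auto simp: SG_def)
    have "(\<Sum>G\<in>SG. graft_coeff M N G * c G) =
        (\<Sum>G\<in>SG. of_nat (count (graft_forest M N) G) * c G) / of_nat (fweight N)"
      by (simp add: graft_coeff_def sum_divide_distrib)
    also have "(\<Sum>G\<in>SG. of_nat (count (graft_forest M N) G) * c G) = (\<Sum>G\<in>#graft_forest M N. c G)"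
      by (rule sum_mset_eq_sum_count[OF fSG sub, symmetric])
    also have "\<dots> = of_nat (count (\<Sum>G\<in>#graft_forest M N. cop_forest G) (A, B))"
      by (simp add: c_def count_sum_mset multiset.map_comp comp_def)
    also have "\<dots> = (\<Sum>z\<in>#cop_forest N. of_nat (count (graft_pair M z) (A, B)))"
      by (simp add: cop_graft_forest graft_pairs_def count_sum_mset multiset.map_comp comp_def)
    finally show "(\<Sum>G\<in>SG. graft_coeff M N G * c G) =
        (\<Sum>z\<in>#cop_forest N. of_nat (count (graft_pair M z) (A, B))) / of_nat (fweight N)" .
  qed
  finally show ?thesis by (simp add: SX_def SY_def)
qed

lemma top_hr_cop_left:
  assumes x: "hr_elem x" and y: "hr_elem y"
  shows "top (\<lambda>M. hr_cop x (A, M)) y B = (\<Sum>M\<in>hr_supp x. x M * (\<Sum>N\<in>hr_supp y. y N *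
      (of_nat (count (graft_pair M ({#}, N)) (A, B)) / of_nat (fweight N))))"
proof -
  define SX SY where "SX = hr_supp x" and "SY = hr_supp y"
  have fSX: "finite SX" and fSY: "finite SY"
    using x y by (simp_all add: SX_def SY_def hr_elem_iff_finite_supp)
  define S2 where "S2 = (\<Union>M\<in>SX. snd ` set_mset (cop_forest M))"
  have fS2: "finite S2" using fSX by (simp add: S2_def)
  have hc: "hr_cop x (A, M'') = (\<Sum>M\<in>SX. x M * of_nat (count (cop_forest M) (A, M'')))" for M''
    by (rule hr_cop_eq_sum[OF fSX]) (simp add: SX_def)
  have s2: "hr_supp (\<lambda>M. hr_cop x (A, M)) \<subseteq> S2"
  proof
    fix M'' assume "M'' \<in> hr_supp (\<lambda>M. hr_cop x (A, M))"
    then obtain M where "M \<in> SX" "count (cop_forest M) (A, M'') \<noteq> 0"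
      by (auto simp: hr_supp_def hc elim!: sum.not_neutral_contains_not_neutral)
    then show "M'' \<in> S2" unfolding S2_def by (force simp: count_eq_zero_iff)
  qed
  have inner: "of_nat (count (graft_pair M ({#}, N)) (A, B)) / of_nat (fweight N) =
      (\<Sum>M''\<in>S2. of_nat (count (cop_forest M) (A, M'')) * graft_coeff M'' N B)" if "M \<in> SX" for M N
  proof -
    have sub: "snd ` set_mset (cop_forest M) \<subseteq> S2" using that by (auto simp: S2_def)
    have "of_nat (count (graft_pair M ({#}, N)) (A, B)) / of_nat (fweight N) =
        (\<Sum>w\<in>#cop_forest M. if fst w = A then graft_coeff (snd w) N B else 0)"
      unfolding count_graft_pair_right of_nat_sum_mset sum_mset_divide graft_coeff_def
      by (simp add: multiset.map_comp comp_def, rule arg_cong[of _ _ sum_mset], rule image_mset_cong, simp)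
    also have "\<dots> = (\<Sum>M''\<in>S2. of_nat (count (cop_forest M) (A, M'')) * graft_coeff M'' N B)"
      by (rule sum_mset_fst_eq[OF fS2 sub])
    finally show ?thesis .
  qed
  have "top (\<lambda>M. hr_cop x (A, M)) y B =
      (\<Sum>M''\<in>S2. \<Sum>N\<in>SY. hr_cop x (A, M'') * y N * graft_coeff M'' N B)"
    by (rule top_eq_sum[OF fS2 s2 fSY]) (simp add: SY_def)
  also have "\<dots> = (\<Sum>M\<in>SX. x M * (\<Sum>N\<in>SY. y N *
      (\<Sum>M''\<in>S2. of_nat (count (cop_forest M) (A, M'')) * graft_coeff M'' N B)))"
    unfolding hc sum_distrib_right sum_distrib_left
    by (rule trans[OF sum_rotate3]) (simp add: mult_ac)
  finally show ?thesis by (simp add: inner SX_def SY_def)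
qed

theorem hr_cop_top_primitive:
  assumes x: "hr_elem x" and q: "primitive q"
  shows "hr_cop (top x q) (A, B) = (if B = {#} then top x q A else 0) + top (\<lambda>M. hr_cop x (A, M)) q B"
proof -
  define SX SQ where "SX = hr_supp x" and "SQ = hr_supp q"
  have fSX: "finite SX" and fSQ: "finite SQ"
    using x primitive_hr_elem[OF q] by (simp_all add: SX_def SQ_def hr_elem_iff_finite_supp)
  define \<phi> where "\<phi> M z = (of_nat (count (graft_pair M z) (A, B)) :: rat)" for M z
  have "hr_cop (top x q) (A, B) =
      (\<Sum>M\<in>SX. x M * (\<Sum>N\<in>SQ. q N * ((\<Sum>z\<in>#cop_forest N. \<phi> M z) / of_nat (fweight N))))"
    unfolding SX_def SQ_def \<phi>_def by (rule hr_cop_top[OF x primitive_hr_elem[OF q]])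
  also have "\<dots> = (\<Sum>M\<in>SX. x M * (\<Sum>N\<in>SQ. q N *
      ((\<phi> M (N, {#}) + \<phi> M ({#}, N)) / of_nat (fweight N))))"
    unfolding SQ_def by (simp only: primitive_pairing_weighted[OF q])
  also have "\<dots> = (\<Sum>M\<in>SX. \<Sum>N\<in>SQ. if B = {#} then x M * q N * graft_coeff M N A else 0)
      + (\<Sum>M\<in>SX. x M * (\<Sum>N\<in>SQ. q N * (\<phi> M ({#}, N) / of_nat (fweight N))))"
  proof -
    have "x M * (q N * ((\<phi> M (N, {#}) + \<phi> M ({#}, N)) / of_nat (fweight N))) =
        (if B = {#} then x M * q N * graft_coeff M N A else 0)
        + x M * (q N * (\<phi> M ({#}, N) / of_nat (fweight N)))" for M N
      by (simp add: \<phi>_def count_graft_pair_left graft_coeff_def add_divide_distrib algebra_simps)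
    then show ?thesis by (simp only: sum_distrib_left sum.distrib)
  qed
  also have "(\<Sum>M\<in>SX. \<Sum>N\<in>SQ. if B = {#} then x M * q N * graft_coeff M N A else 0) =
      (if B = {#} then top x q A else 0)"
    by (simp add: top_eq_sum[OF fSX _ fSQ] SX_def SQ_def)
  also have "(\<Sum>M\<in>SX. x M * (\<Sum>N\<in>SQ. q N * (\<phi> M ({#}, N) / of_nat (fweight N)))) =
      top (\<lambda>M. hr_cop x (A, M)) q B"
    unfolding SX_def SQ_def \<phi>_def by (rule top_hr_cop_left[OF x primitive_hr_elem[OF q], symmetric])
  finally show ?thesis .
qed

lemma hr_cop_top_primitive_expand:
  assumes y: "hr_elem y" and L: "finite L" and u: "\<And>l. l \<in> L \<Longrightarrow> hr_elem (u l)"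
    and q: "primitive q"
    and cop_y: "\<And>M. hr_cop y (A, M) = y A * hr_one M + hr_one A * y M + (\<Sum>l\<in>L. c l * u l M)"
  shows "hr_cop (top y q) (A, B) =
    hr_one B * top y q A + y A * q B + hr_one A * top y q B + (\<Sum>l\<in>L. c l * top (u l) q B)"
proof -
  have hq: "hr_elem q" by (rule primitive_hr_elem[OF q])
  have "hr_cop (top y q) (A, B) = (if B = {#} then top y q A else 0) + top (\<lambda>M. hr_cop y (A, M)) q B"
    by (rule hr_cop_top_primitive[OF y q])
  also have "top (\<lambda>M. hr_cop y (A, M)) q B =
      (y A * top hr_one q B + hr_one A * top y q B) + (\<Sum>l\<in>L. c l * top (u l) q B)"
    using y u L hq hr_elem_hr_one
    by (simp add: cop_y top_add_left top_smult_left top_lin_left hr_elem_add hr_elem_smult hr_elem_lin)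
  also have "top hr_one q = q"
    by (rule top_hr_one_left[OF hq primitive_empty[OF q]])
  finally show ?thesis by (simp add: hr_one_def)
qed

lemma sum_triangle_swap:
  fixes g :: "nat \<Rightarrow> nat \<Rightarrow> 'a::comm_monoid_add"
  shows "(\<Sum>m\<in>{j<..k}. \<Sum>l\<in>{m<..k}. g l m) = (\<Sum>l\<in>{j<..k}. \<Sum>m\<in>{j<..<l}. g l m)"
proof -
  have "(\<Sum>m\<in>{j<..k}. \<Sum>l\<in>{m<..k}. g l m) = (\<Sum>m\<in>{j<..k}. \<Sum>l\<in>{j<..k}. if m < l then g l m else 0)"
    by (rule sum.cong[OF refl]) (simp add: sum.inter_filter[symmetric], rule sum.cong, auto)
  also have "\<dots> = (\<Sum>l\<in>{j<..k}. \<Sum>m\<in>{j<..k}. if m < l then g l m else 0)"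
    by (rule sum.swap)
  also have "\<dots> = (\<Sum>l\<in>{j<..k}. \<Sum>m\<in>{j<..<l}. g l m)"
    by (rule sum.cong[OF refl]) (simp add: sum.inter_filter[symmetric], rule sum.cong, auto)
  finally show ?thesis .
qed

text \<open>If \<Delta>Y_m = Y_m \<otimes> 1 + 1 \<otimes> Y_m + \<Sum>_l Y_l \<otimes> X_lm and X_lj obeys the
  recursion of the coefficients of C_(p), then by \<open>hr_cop_top_primitive_expand\<close> the mixed
  terms Y_l \<otimes> X_lj of \<Delta>Y_j are cancelled exactly by the coproducts of the Y_m \<top> q_m.\<close>

lemma primitive_correction:
  fixes Y :: "nat \<Rightarrow> forest \<Rightarrow> rat" and X :: "nat \<Rightarrow> nat \<Rightarrow> forest \<Rightarrow> rat"
    and q :: "nat \<Rightarrow> forest \<Rightarrow> rat"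
  assumes hY: "\<And>l. hr_elem (Y l)" and hX: "\<And>l m. hr_elem (X l m)"
    and hq: "\<And>m. j < m \<Longrightarrow> m \<le> k \<Longrightarrow> primitive (q m)"
    and cop_Y: "\<And>m A B. j \<le> m \<Longrightarrow> m \<le> k \<Longrightarrow>
       hr_cop (Y m) (A, B) = Y m A * hr_one B + hr_one A * Y m B + (\<Sum>l\<in>{m<..k}. Y l A * X l m B)"
    and rec_X: "\<And>l. j < l \<Longrightarrow> l \<le> k \<Longrightarrow> X l j = (\<lambda>F. q l F + (\<Sum>m\<in>{j<..<l}. top (X l m) (q m) F))"
    and jk: "j \<le> k"
  shows "primitive (\<lambda>F. Y j F - (\<Sum>m\<in>{j<..k}. top (Y m) (q m) F))"
proof -
  define P where "P = (\<lambda>F. Y j F - (\<Sum>m\<in>{j<..k}. top (Y m) (q m) F))"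
  define T where "T m = top (Y m) (q m)" for m
  have hT: "hr_elem (T m)" if "m \<in> {j<..k}" for m
    using that hY hq by (auto simp: T_def intro: hr_elem_top primitive_hr_elem)
  have hP: "hr_elem P"
    unfolding P_def using hT by (intro hr_elem_diff_sum hY) (auto simp: T_def)
  have "hr_cop P (A, B) = hr_one B * P A + hr_one A * P B" for A B
  proof -
    have cop_T: "hr_cop (T m) (A, B) = hr_one B * T m A + Y m A * q m B + hr_one A * T m B
        + (\<Sum>l\<in>{m<..k}. Y l A * top (X l m) (q m) B)" if "m \<in> {j<..k}" for m
      using that unfolding T_def
      by (intro hr_cop_top_primitive_expand hY hX hq cop_Y) auto
    have "hr_cop P (A, B) = hr_cop (Y j) (A, B) - (\<Sum>m\<in>{j<..k}. hr_cop (T m) (A, B))"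
      unfolding P_def T_def[symmetric] by (rule hr_cop_diff_sum[OF hY]) (use hT in auto)
    also have "hr_cop (Y j) (A, B) = Y j A * hr_one B + hr_one A * Y j B
        + (\<Sum>l\<in>{j<..k}. Y l A * q l B) + (\<Sum>l\<in>{j<..k}. \<Sum>m\<in>{j<..<l}. Y l A * top (X l m) (q m) B)"
      by (simp add: cop_Y[OF order_refl jk] rec_X distrib_left sum_distrib_left sum.distrib add.assoc)
    also have "(\<Sum>m\<in>{j<..k}. hr_cop (T m) (A, B)) =
        hr_one B * (\<Sum>m\<in>{j<..k}. T m A) + (\<Sum>m\<in>{j<..k}. Y m A * q m B)
        + hr_one A * (\<Sum>m\<in>{j<..k}. T m B) + (\<Sum>l\<in>{j<..k}. \<Sum>m\<in>{j<..<l}. Y l A * top (X l m) (q m) B)"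
      by (simp add: cop_T sum.distrib sum_distrib_left sum_triangle_swap)
    finally show ?thesis by (simp add: P_def T_def algebra_simps)
  qed
  then show ?thesis using hP unfolding primitive_def P_def by (auto simp: hr_one_def)
qed

section \<open>Decompositions and the coefficients of C_(p)\<close>

lemma decomps_Cons:
  "(x # ds) \<in> decomps a i \<longleftrightarrow> fst x = a \<and> fst x \<le> snd x \<and>
     (if ds = [] then snd x = i else ds \<in> decomps (Suc (snd x)) i)"
proof (cases ds)
  case Nil then show ?thesis by (auto simp: decomps_def)
next
  case (Cons y ys)
  have "(\<forall>r. Suc r < length (x # y # ys) \<longrightarrow> P r) \<longleftrightarrow> P 0 \<and> (\<forall>r. Suc r < length (y # ys) \<longrightarrow> P (Suc r))" for P
    by (simp add: All_less_Suc2[symmetric] less_Suc_eq_0_disj)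
  then show ?thesis by (auto simp add: Cons decomps_def All_less_Suc2 simp del: length_Cons)
qed

lemma le_of_mem_decomps: "ds \<in> decomps a i \<Longrightarrow> a \<le> i"
proof (induction ds arbitrary: a)
  case Nil then show ?case by (simp add: decomps_def)
next
  case (Cons x ds)
  then show ?case
    by (auto simp: decomps_Cons split: if_splits) (meson Cons.IH Suc_leD le_trans)
qed

lemma decomps_eq:
  assumes "a \<le> i"
  shows "decomps a i = insert [(a, i)] (\<Union>m\<in>{a..<i}. (\<lambda>ds. (a, m) # ds) ` decomps (Suc m) i)"
proof (intro set_eqI iffI)
  fix ds assume ds: "ds \<in> decomps a i"
  then obtain x ds' where x: "ds = x # ds'" by (cases ds) (auto simp: decomps_def)
  obtain m where m: "x = (a, m)" using ds x by (cases x) (auto simp: decomps_Cons)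
  show "ds \<in> insert [(a, i)] (\<Union>m\<in>{a..<i}. (\<lambda>ds. (a, m) # ds) ` decomps (Suc m) i)"
  proof (cases "ds' = []")
    case True then show ?thesis using ds x m by (simp add: decomps_Cons)
  next
    case False
    then have d': "ds' \<in> decomps (Suc m) i" and am: "a \<le> m" using ds x m by (auto simp: decomps_Cons)
    from d' have "Suc m \<le> i" by (rule le_of_mem_decomps)
    then show ?thesis using d' am x m by auto
  qed
next
  fix ds assume "ds \<in> insert [(a, i)] (\<Union>m\<in>{a..<i}. (\<lambda>ds. (a, m) # ds) ` decomps (Suc m) i)"
  then show "ds \<in> decomps a i"
  proof
    assume "ds = [(a, i)]" then show ?thesis using assms by (simp add: decomps_Cons)
  next
    assume "ds \<in> (\<Union>m\<in>{a..<i}. (\<lambda>ds. (a, m) # ds) ` decomps (Suc m) i)"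
    then obtain m ds' where "m \<in> {a..<i}" "ds' \<in> decomps (Suc m) i" "ds = (a, m) # ds'" by auto
    moreover then have "ds' \<noteq> []" by (auto simp: decomps_def)
    ultimately show ?thesis by (simp add: decomps_Cons)
  qed
qed

lemma decomps_empty: "i < a \<Longrightarrow> decomps a i = {}"
  using le_of_mem_decomps by force

lemma finite_decomps: "finite (decomps a i)"
proof (induction "Suc i - a" arbitrary: a rule: less_induct)
  case less
  show ?case
  proof (cases "a \<le> i")
    case True
    have "finite ((\<lambda>ds. (a, m) # ds) ` decomps (Suc m) i)" if "m \<in> {a..<i}" for m
      using that by (intro finite_imageI less) auto
    then show ?thesis by (simp add: decomps_eq[OF True])
  next
    case False then show ?thesis by (simp add: decomps_empty)
  qed
qed

lemma Nil_notin_decomps: "ds \<in> decomps a i \<Longrightarrow> ds \<noteq> []"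
  by (simp add: decomps_def)

lemma top_word_singleton [simp]: "top_word p [(a, b)] = p a b"
  by (simp add: top_word_def)

lemma top_word_Cons: "ds \<noteq> [] \<Longrightarrow> top_word p ((a, b) # ds) = top (top_word p ds) (p a b)"
proof -
  assume "ds \<noteq> []"
  then obtain c d rest where r: "rev ds = (c, d) # rest" by (cases "rev ds") auto
  then show ?thesis by (simp add: top_word_def r)
qed

lemma hr_elem_foldl_top:
  assumes "\<And>a b. hr_elem (p a b)"
  shows "hr_elem acc \<Longrightarrow> hr_elem (foldl (\<lambda>acc (c, d). top acc (p c d)) acc rest)"
proof (induction rest arbitrary: acc)
  case Nil then show ?case by simp
next
  case (Cons x rest)
  then show ?case using assms by (cases x) (simp add: hr_elem_top)
qed

lemma hr_elem_top_word:
  assumes hp: "\<And>a b. hr_elem (p a b)"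
  shows "hr_elem (top_word p ds)"
proof (cases "rev ds")
  case Nil then show ?thesis by (simp add: top_word_def hr_elem_def)
next
  case (Cons x rest)
  obtain a b where x: "x = (a, b)" by (cases x)
  have "top_word p ds = foldl (\<lambda>acc (c, d). top acc (p c d)) (p a b) rest"
    by (simp add: top_word_def Cons x)
  moreover have "hr_elem (foldl (\<lambda>acc (c, d). top acc (p c d)) (p a b) rest)"
    by (rule hr_elem_foldl_top[of p, OF hp hp])
  ultimately show ?thesis by simp
qed

lemma hr_elem_Cp_coeff:
  assumes "\<And>a b. hr_elem (p a b)"
  shows "hr_elem (Cp_coeff p i j)"
  unfolding Cp_coeff_def
  by (rule hr_elem_sum[OF finite_decomps]) (rule hr_elem_top_word[OF assms])

text \<open>Split off the first interval {j+1..m} of a decomposition of {j+1..i}.\<close>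

lemma Cp_coeff_rec:
  assumes hp: "\<And>a b. hr_elem (p a b)" and ji: "j < i"
  shows "Cp_coeff p i j = (\<lambda>F. p (Suc j) i F + (\<Sum>m\<in>{j<..<i}. top (Cp_coeff p i m) (p (Suc j) m) F))"
proof
  fix F
  have le: "Suc j \<le> i" using ji by simp
  have disj: "[(Suc j, i)] \<notin> (\<Union>m\<in>{Suc j..<i}. (\<lambda>ds. (Suc j, m) # ds) ` decomps (Suc m) i)"
    by (auto dest: Nil_notin_decomps)
  have "Cp_coeff p i j F = top_word p [(Suc j, i)] F +
      (\<Sum>ds\<in>(\<Union>m\<in>{Suc j..<i}. (\<lambda>ds. (Suc j, m) # ds) ` decomps (Suc m) i). top_word p ds F)"
    unfolding Cp_coeff_def decomps_eq[OF le]
    by (rule sum.insert[OF _ disj]) (auto intro: finite_decomps)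
  also have "(\<Sum>ds\<in>(\<Union>m\<in>{Suc j..<i}. (\<lambda>ds. (Suc j, m) # ds) ` decomps (Suc m) i). top_word p ds F)
      = (\<Sum>m\<in>{Suc j..<i}. \<Sum>ds\<in>(\<lambda>ds. (Suc j, m) # ds) ` decomps (Suc m) i. top_word p ds F)"
    by (rule sum.UNION_disjoint) (auto intro: finite_decomps)
  also have "\<dots> = (\<Sum>m\<in>{Suc j..<i}. \<Sum>ds\<in>decomps (Suc m) i. top (top_word p ds) (p (Suc j) m) F)"
    by (rule sum.cong[OF refl], subst sum.reindex, simp add: inj_on_def, rule sum.cong[OF refl],
        simp add: top_word_Cons Nil_notin_decomps)
  also have "\<dots> = (\<Sum>m\<in>{Suc j..<i}. top (Cp_coeff p i m) (p (Suc j) m) F)"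
    unfolding Cp_coeff_def
    by (rule sum.cong[OF refl], rule top_sum_left[symmetric]) (auto intro: finite_decomps hr_elem_top_word hp)
  finally show "Cp_coeff p i j F = p (Suc j) i F + (\<Sum>m\<in>{j<..<i}. top (Cp_coeff p i m) (p (Suc j) m) F)"
    by (simp add: atLeastSucLessThan_greaterThanLessThan)
qed

lemma Cp_coeff_eq_0: "i \<le> j \<Longrightarrow> Cp_coeff p i j = (\<lambda>_. 0)"
  by (simp add: Cp_coeff_def decomps_empty)

lemma Cp_coeff_cong:
  assumes hp: "\<And>a b. hr_elem (p a b)" and hp': "\<And>a b. hr_elem (p' a b)"
    and eq: "\<And>a b. b \<le> i \<Longrightarrow> p a b = p' a b"
  shows "Cp_coeff p i j = Cp_coeff p' i j"
proof (induction "i - j" arbitrary: j rule: less_induct)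
  case less
  show ?case
  proof (cases "j < i")
    case True
    have "Cp_coeff p i m = Cp_coeff p' i m" if "m \<in> {j<..<i}" for m
      using that by (intro less) auto
    then show ?thesis using True
      by (simp add: Cp_coeff_rec[OF hp True] Cp_coeff_rec[OF hp' True] eq)
  next
    case False then show ?thesis by (simp add: Cp_coeff_eq_0)
  qed
qed

text \<open>In C_(p), \<Delta>(e_i) = \<Sum>_j triangular_coeffs p i j \<otimes> e_j.\<close>

definition triangular_coeffs :: "(nat \<Rightarrow> nat \<Rightarrow> forest \<Rightarrow> rat) \<Rightarrow> nat \<Rightarrow> nat \<Rightarrow> forest \<Rightarrow> rat" where
  "triangular_coeffs p i j = (if j < i then Cp_coeff p i j else if j = i then hr_one else (\<lambda>_. 0))"

text \<open>Given the coefficients Y_j of a new basis vector, the column p_(j+1,m) is chosen so that the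
  recursion of the coefficients yields C_(m,j) = Y_j (the entry for a = 0 is never used).\<close>

definition extend_column ::
    "(nat \<Rightarrow> nat \<Rightarrow> forest \<Rightarrow> rat) \<Rightarrow> (nat \<Rightarrow> forest \<Rightarrow> rat) \<Rightarrow> nat \<Rightarrow> nat \<Rightarrow> nat \<Rightarrow> forest \<Rightarrow> rat" where
  "extend_column p Y m a c =
    (if c = m then (\<lambda>F. Y (a - 1) F - (\<Sum>l\<in>{a - 1<..<m}. top (Y l) (p a l) F)) else p a c)"

lemma hr_elem_extend_column:
  assumes "\<And>a c. hr_elem (p a c)" "\<And>j. hr_elem (Y j)"
  shows "hr_elem (extend_column p Y m a c)"
  using assms by (auto simp: extend_column_def intro!: hr_elem_diff_sum hr_elem_top)

lemma Cp_coeff_extend_column_less: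
  assumes "\<And>a c. hr_elem (p a c)" "\<And>j. hr_elem (Y j)" "i < m"
  shows "Cp_coeff (extend_column p Y m) i j = Cp_coeff p i j"
  using assms by (intro Cp_coeff_cong hr_elem_extend_column) (auto simp: extend_column_def)

lemma Cp_coeff_extend_column_last:
  assumes hp: "\<And>a c. hr_elem (p a c)" and hY: "\<And>j. hr_elem (Y j)" and "j < m"
  shows "Cp_coeff (extend_column p Y m) m j = Y j"
  using \<open>j < m\<close>
proof (induction "m - j" arbitrary: j rule: less_induct)
  case less
  let ?p' = "extend_column p Y m"
  have hp': "hr_elem (?p' a c)" for a c by (rule hr_elem_extend_column[OF hp hY])
  have "Cp_coeff ?p' m j =
      (\<lambda>F. ?p' (Suc j) m F + (\<Sum>l\<in>{j<..<m}. top (Cp_coeff ?p' m l) (?p' (Suc j) l) F))"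
    by (rule Cp_coeff_rec[OF hp' less.prems])
  also have "\<dots> = (\<lambda>F. ?p' (Suc j) m F + (\<Sum>l\<in>{j<..<m}. top (Y l) (p (Suc j) l) F))"
    using less by (intro ext arg_cong2[where f = "(+)"] sum.cong) (auto simp: extend_column_def)
  also have "\<dots> = Y j"
    by (simp add: extend_column_def)
  finally show ?case .
qed

context vector_space
begin

lemma independent_family_coeff_eq:
  assumes inj: "inj_on b I" and "finite I" and ind: "independent (b ` I)"
    and eq: "(\<Sum>j\<in>I. scale (c j) (b j)) = (\<Sum>j\<in>I. scale (c' j) (b j))" and "j \<in> I"
  shows "c j = c' j"
proof -
  define u where "u v = c (the_inv_into I b v) - c' (the_inv_into I b v)" for v
  have "(\<Sum>v\<in>b ` I. scale (u v) v) = (\<Sum>j\<in>I. scale (c j - c' j) (b j))"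
    by (simp add: sum.reindex[OF inj] u_def the_inv_into_f_f[OF inj])
  also have "\<dots> = 0"
    using eq by (simp add: scale_left_diff_distrib sum_subtractf)
  finally have "u (b j) = 0"
    using ind assms(2,5) by (intro independentD[of "b ` I" "b ` I" u]) auto
  then show ?thesis by (simp add: u_def the_inv_into_f_f[OF inj \<open>j \<in> I\<close>])
qed

lemma independent_family_coeff_eq_0:
  assumes "inj_on b I" "finite I" "independent (b ` I)" "(\<Sum>j\<in>I. scale (c j) (b j)) = 0" "j \<in> I"
  shows "c j = 0"
  using independent_family_coeff_eq[OF assms(1-3), of c "\<lambda>_. 0" j] assms(4,5) by simp

lemma span_family_coords:
  assumes inj: "inj_on b I" and "finite I" and "u \<in> span (b ` I)"
  obtains c where "u = (\<Sum>j\<in>I. scale (c j) (b j))"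
proof -
  obtain w where "u = (\<Sum>v\<in>b ` I. scale (w v) v)"
    using assms(2,3) span_finite[of "b ` I"] by auto
  then have "u = (\<Sum>j\<in>I. scale (w (b j)) (b j))"
    by (simp add: sum.reindex[OF inj])
  then show ?thesis by (rule that)
qed

lemma independent_family_extend:
  assumes "inj_on b {..<m}" "independent (b ` {..<m})" "w \<notin> span (b ` {..<m})"
  shows "inj_on (b(m := w)) {..<Suc m}" "independent ((b(m := w)) ` {..<Suc m})"
proof -
  have "w \<notin> b ` {..<m}" using assms(3) by (meson span_base)
  then show "inj_on (b(m := w)) {..<Suc m}"
    using assms(1) by (simp add: lessThan_Suc inj_on_def) (metis fun_upd_other image_eqI lessThan_iff less_irrefl)
  have "{..<m} \<inter> {x. x \<noteq> m} = {..<m}" by auto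
  then have "(b(m := w)) ` {..<Suc m} = insert w (b ` {..<m})"
    by (simp add: lessThan_Suc)
  then show "independent ((b(m := w)) ` {..<Suc m})"
    using independent_insertI[OF assms(3,2)] by simp
qed

end

section \<open>Finite-dimensional comodules\<close>

locale finite_comodule = finite_dimensional_vector_space sc Basis
  for sc :: "rat \<Rightarrow> 'v::ab_group_add \<Rightarrow> 'v" and Basis :: "'v set" +
  fixes delta :: "'v \<Rightarrow> forest \<Rightarrow> 'v"
  assumes comod: "left_comodule sc delta"
begin

lemma finite_coaction_supp: "finite {F. delta v F \<noteq> 0}"
  using comod by (simp add: left_comodule_def)

lemma coaction_add: "delta (v + w) F = delta v F + delta w F"
  using comod unfolding left_comodule_def by metis

lemma coaction_scale: "delta (sc c v) F = sc c (delta v F)"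
  using comod unfolding left_comodule_def by metis

lemma coaction_counit: "delta v {#} = v"
  using comod by (simp add: left_comodule_def)

lemma coaction_coassoc:
  "(\<Sum>F\<in>{F. delta v F \<noteq> 0}. sc (of_nat (count (cop_forest F) (A, B))) (delta v F)) = delta (delta v A) B"
  using comod unfolding left_comodule_def by metis

lemma coaction_zero: "delta 0 F = 0"
  using coaction_add[of 0 0 F] by simp

lemma coaction_lin: "delta (\<Sum>i\<in>I. sc (c i) (b i)) F = (\<Sum>i\<in>I. sc (c i) (delta (b i) F))"
  by (induction I rule: infinite_finite_induct) (simp_all add: coaction_zero coaction_add coaction_scale)

definition coaction_forests :: "forest set" where
  "coaction_forests = (\<Union>\<beta>\<in>Basis. {F. delta \<beta> F \<noteq> 0})"

lemma finite_coaction_forests: "finite coaction_forests"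
  unfolding coaction_forests_def using finite_Basis finite_coaction_supp by auto

lemma coaction_eq_0: "F \<notin> coaction_forests \<Longrightarrow> delta v F = 0"
proof -
  assume F: "F \<notin> coaction_forests"
  obtain u where "v = (\<Sum>\<beta>\<in>Basis. sc (u \<beta>) \<beta>)"
    using span_Basis span_finite[OF finite_Basis] by auto
  then have "delta v F = (\<Sum>\<beta>\<in>Basis. sc (u \<beta>) (delta \<beta> F))"
    by (simp add: coaction_lin)
  also have "\<dots> = 0" using F by (intro sum.neutral) (auto simp: coaction_forests_def)
  finally show ?thesis .
qed

text \<open>Coassociativity expresses \<delta>(\<delta>(v)_F0)_B through the \<delta>(v)_F with |F| = |F0| + |B|.\<close>

lemma coaction_coeff_in_span:
  assumes heavier: "\<And>v F. fweight F0 < fweight F \<Longrightarrow> delta v F \<in> span S" and "B \<noteq> {#}"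
  shows "delta (delta v F0) B \<in> span S"
proof -
  have "sc (of_nat (count (cop_forest F) (F0, B))) (delta v F) \<in> span S" for F
  proof (cases "count (cop_forest F) (F0, B) = 0")
    case False
    then have "fweight F0 + fweight B = fweight F"
      using fweight_cop_forest[of "(F0, B)" F] by (simp add: count_eq_zero_iff)
    moreover have "fweight B > 0" using \<open>B \<noteq> {#}\<close> fweight_eq_0_iff by auto
    ultimately show ?thesis by (intro span_scale heavier) simp
  qed (simp add: span_zero)
  then show ?thesis
    unfolding coaction_coassoc[symmetric] by (intro span_sum)
qed

lemma exists_coaction_complement:
  assumes "span S \<noteq> UNIV"
  obtains w where "w \<notin> span S" "\<And>F. F \<noteq> {#} \<Longrightarrow> delta w F \<in> span S"
proof (cases "\<forall>v F. F \<noteq> {#} \<longrightarrow> delta v F \<in> span S")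
  case True
  then show ?thesis using assms that by blast
next
  case False
  define Bad where "Bad = {F \<in> coaction_forests. F \<noteq> {#} \<and> (\<exists>v. delta v F \<notin> span S)}"
  have "finite Bad" using finite_coaction_forests by (simp add: Bad_def)
  have in_Bad: "F \<in> Bad" if "F \<noteq> {#}" "delta v F \<notin> span S" for v F
  proof -
    have "delta v F \<noteq> 0" using that(2) span_zero by metis
    then have "F \<in> coaction_forests" using coaction_eq_0 by blast
    then show ?thesis using that by (auto simp: Bad_def)
  qed
  have "Bad \<noteq> {}" using False in_Bad by blast
  define d where "d = Max (fweight ` Bad)"
  have "d \<in> fweight ` Bad"
    unfolding d_def using \<open>finite Bad\<close> \<open>Bad \<noteq> {}\<close> by (intro Max_in) auto
  then obtain F0 where "F0 \<in> Bad" "fweight F0 = d" by auto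
  then obtain v where v: "delta v F0 \<notin> span S" by (auto simp: Bad_def)
  have "delta v' F \<in> span S" if "fweight F0 < fweight F" for v' F
  proof (rule ccontr)
    assume "delta v' F \<notin> span S"
    moreover have "F \<noteq> {#}" using that by auto
    ultimately have "F \<in> Bad" by (rule in_Bad[rotated])
    then have "fweight F \<le> d"
      unfolding d_def using \<open>finite Bad\<close> by (intro Max_ge) auto
    then show False using that \<open>fweight F0 = d\<close> by simp
  qed
  then show ?thesis
    using v by (intro that[of "delta v F0"] coaction_coeff_in_span)
qed

lemma hr_cop_coaction_coeffs:
  assumes fJ: "finite J" and inj: "inj_on b J" and ind: "independent (b ` J)"
    and rep: "\<And>l F. l \<in> J \<Longrightarrow> delta (b l) F = (\<Sum>j\<in>J. sc (X l j F) (b j))"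
    and "i \<in> J" "j \<in> J"
  shows "hr_cop (X i j) (A, B) = (\<Sum>l\<in>J. X i l A * X l j B)"
proof -
  define SD where "SD = {F. delta (b i) F \<noteq> 0}"
  have fSD: "finite SD" by (simp add: SD_def finite_coaction_supp)
  have supp: "hr_supp (X i k) \<subseteq> SD" if "k \<in> J" for k
  proof
    fix F assume "F \<in> hr_supp (X i k)"
    then show "F \<in> SD"
      using independent_family_coeff_eq_0[OF inj fJ ind, of "\<lambda>j. X i j F" k] rep[OF \<open>i \<in> J\<close>, of F] that
      by (auto simp: SD_def hr_supp_def)
  qed
  define c where "c F = (of_nat (count (cop_forest F) (A, B)) :: rat)" for F
  have "delta (delta (b i) A) B = (\<Sum>F\<in>SD. sc (c F) (delta (b i) F))"
    by (simp add: coaction_coassoc[symmetric] SD_def c_def)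
  also have "\<dots> = (\<Sum>k\<in>J. sc (\<Sum>F\<in>SD. X i k F * c F) (b k))"
    by (simp add: rep[OF \<open>i \<in> J\<close>] scale_sum_right scale_sum_left mult.commute)
      (rule sum.swap)
  also have "\<dots> = (\<Sum>k\<in>J. sc (hr_cop (X i k) (A, B)) (b k))"
    by (rule sum.cong[OF refl]) (simp add: hr_cop_eq_sum[OF fSD supp] c_def)
  finally have L: "delta (delta (b i) A) B = (\<Sum>k\<in>J. sc (hr_cop (X i k) (A, B)) (b k))" .
  have "delta (delta (b i) A) B = (\<Sum>l\<in>J. sc (X i l A) (\<Sum>k\<in>J. sc (X l k B) (b k)))"
    by (simp add: rep[OF \<open>i \<in> J\<close>] coaction_lin rep)
  also have "\<dots> = (\<Sum>k\<in>J. sc (\<Sum>l\<in>J. X i l A * X l k B) (b k))"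
    by (simp add: scale_sum_right scale_sum_left, subst sum.swap, simp)
  finally show ?thesis
    using L by (intro independent_family_coeff_eq[OF inj fJ ind _ \<open>j \<in> J\<close>]) simp
qed

definition triangular_basis :: "nat \<Rightarrow> (nat \<Rightarrow> nat \<Rightarrow> forest \<Rightarrow> rat) \<Rightarrow> (nat \<Rightarrow> 'v) \<Rightarrow> bool" where
  "triangular_basis m p b \<longleftrightarrow>
     (\<forall>a c. hr_elem (p a c)) \<and> (\<forall>i j. 1 \<le> i \<and> i \<le> j \<and> j < m \<longrightarrow> primitive (p i j)) \<and>
     inj_on b {..<m} \<and> independent (b ` {..<m}) \<and>
     (\<forall>i<m. delta (b i) = (\<lambda>F. (\<Sum>j<i. sc (Cp_coeff p i j F) (b j)) + (if F = {#} then b i else 0)))"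

lemma triangular_basis_0: "triangular_basis 0 (\<lambda>_ _ _. 0) b"
  by (simp add: triangular_basis_def hr_elem_def independent_empty)

lemma coaction_eq_triangular_coeffs:
  assumes "delta (b i) = (\<lambda>F. (\<Sum>j<i. sc (Cp_coeff p i j F) (b j)) + (if F = {#} then b i else 0))"
    and "i < n"
  shows "delta (b i) F = (\<Sum>j<n. sc (triangular_coeffs p i j F) (b j))"
proof -
  have "(\<Sum>j<n. sc (triangular_coeffs p i j F) (b j)) =
      (\<Sum>j<n. (if j < i then sc (Cp_coeff p i j F) (b j) else 0) + (if j = i then sc (hr_one F) (b i) else 0))"
    by (rule sum.cong) (auto simp: triangular_coeffs_def)
  also have "\<dots> = (\<Sum>j<n. if j < i then sc (Cp_coeff p i j F) (b j) else 0) + sc (hr_one F) (b i)"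
    using \<open>i < n\<close> by (simp add: sum.distrib)
  also have "(\<Sum>j<n. if j < i then sc (Cp_coeff p i j F) (b j) else 0) =
      (\<Sum>j\<in>{j\<in>{..<n}. j < i}. sc (Cp_coeff p i j F) (b j))"
    by (rule sum.inter_filter[symmetric]) simp
  also have "{j\<in>{..<n}. j < i} = {..<i}" using \<open>i < n\<close> by auto
  finally show ?thesis using assms(1) by (simp add: hr_one_def)
qed

lemma exists_triangular_complement:
  assumes T: "triangular_basis m p b" and "m < dim (UNIV :: 'v set)"
  obtains w Y where "w \<notin> span (b ` {..<m})" "\<And>j. hr_elem (Y j)"
    "\<And>F. delta w F = (\<Sum>j<m. sc (Y j F) (b j)) + (if F = {#} then w else 0)"
proof -
  have inj: "inj_on b {..<m}" and ind: "independent (b ` {..<m})"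
    using T by (auto simp: triangular_basis_def)
  have "span (b ` {..<m}) \<noteq> UNIV"
  proof
    assume "span (b ` {..<m}) = UNIV"
    then have "dim (UNIV :: 'v set) = m"
      using dim_span_eq_card_independent[OF ind] card_image[OF inj] by simp
    then show False using \<open>m < dim UNIV\<close> by simp
  qed
  then obtain w where w: "w \<notin> span (b ` {..<m})"
    and w_span: "\<And>F. F \<noteq> {#} \<Longrightarrow> delta w F \<in> span (b ` {..<m})"
    by (rule exists_coaction_complement) blast
  have "\<forall>F. \<exists>c. F \<noteq> {#} \<longrightarrow> delta w F = (\<Sum>j<m. sc (c j) (b j))"
    using span_family_coords[OF inj _ w_span] by (metis finite_lessThan)
  then obtain c where c: "\<And>F. F \<noteq> {#} \<Longrightarrow> delta w F = (\<Sum>j<m. sc (c F j) (b j))"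
    by metis
  define Y where "Y j F = (if F = {#} \<or> m \<le> j then 0 else c F j)" for j F
  have rep: "delta w F = (\<Sum>j<m. sc (Y j F) (b j)) + (if F = {#} then w else 0)" for F
    by (cases "F = {#}") (simp_all add: Y_def coaction_counit c)
  have "hr_supp (Y j) \<subseteq> {F. delta w F \<noteq> 0}" for j
  proof
    fix F assume F: "F \<in> hr_supp (Y j)"
    then have "F \<noteq> {#}" "j < m" by (auto simp: hr_supp_def Y_def split: if_splits)
    then show "F \<in> {F. delta w F \<noteq> 0}"
      using F rep[of F] independent_family_coeff_eq_0[OF inj _ ind, of "\<lambda>j. Y j F" j]
      by (auto simp: hr_supp_def)
  qed
  then have "hr_elem (Y j)" for j
    unfolding hr_elem_iff_finite_supp by (rule finite_subset) (rule finite_coaction_supp)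
  then show ?thesis using that w rep by blast
qed

context
  fixes m p b w Y
  assumes T: "triangular_basis m p b" and w: "w \<notin> span (b ` {..<m})"
    and hY: "\<And>j. hr_elem (Y j)"
    and rep: "\<And>F. delta w F = (\<Sum>j<m. sc (Y j F) (b j)) + (if F = {#} then w else 0)"
begin

lemma hr_elem_triangular: "hr_elem (p a c)"
  using T by (simp add: triangular_basis_def)

lemma coaction_extended_family:
  assumes "i < Suc m"
  shows "delta ((b(m := w)) i) = (\<lambda>F. (\<Sum>j<i. sc (Cp_coeff (extend_column p Y m) i j F) ((b(m := w)) j))
    + (if F = {#} then (b(m := w)) i else 0))"
proof (cases "i = m")
  case True
  have "(\<Sum>j<m. sc (Cp_coeff (extend_column p Y m) m j F) ((b(m := w)) j)) = (\<Sum>j<m. sc (Y j F) (b j))" for F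
    by (rule sum.cong) (simp_all add: Cp_coeff_extend_column_last[OF hr_elem_triangular hY])
  then show ?thesis using True by (simp add: rep fun_eq_iff)
next
  case False
  then have "i < m" using assms by simp
  then have eq: "(\<Sum>j<i. sc (Cp_coeff (extend_column p Y m) i j F) ((b(m := w)) j)) =
      (\<Sum>j<i. sc (Cp_coeff p i j F) (b j))" for F
    by (intro sum.cong) (simp_all add: Cp_coeff_extend_column_less[OF hr_elem_triangular hY])
  moreover have "delta (b i) = (\<lambda>F. (\<Sum>j<i. sc (Cp_coeff p i j F) (b j)) + (if F = {#} then b i else 0))"
    using T \<open>i < m\<close> by (simp add: triangular_basis_def)
  moreover have "(b(m := w)) i = b i" using False by simp
  ultimately show ?thesis by (simp only: eq)
qed

lemma hr_cop_complement_coeff: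
  assumes "j < m"
  shows "hr_cop (Y j) (A, B) =
    Y j A * hr_one B + hr_one A * Y j B + (\<Sum>l\<in>{j<..<m}. Y l A * Cp_coeff p l j B)"
proof -
  let ?X = "triangular_coeffs (extend_column p Y m)"
  have inj: "inj_on b {..<m}" and ind: "independent (b ` {..<m})"
    using T by (auto simp: triangular_basis_def)
  have X_last: "?X m j = Y j"
    using assms by (simp add: triangular_coeffs_def Cp_coeff_extend_column_last[OF hr_elem_triangular hY])
  have "hr_cop (?X m j) (A, B) = (\<Sum>l<Suc m. ?X m l A * ?X l j B)"
    using assms independent_family_extend[OF inj ind w]
    by (intro hr_cop_coaction_coeffs[where b = "b(m := w)"] coaction_eq_triangular_coeffs
        coaction_extended_family) auto
  also have "\<dots> = (\<Sum>l<Suc m. (if l = j then Y j A * hr_one B else 0) + (if l = m then hr_one A * Y j B else 0)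
      + (if j < l \<and> l < m then Y l A * Cp_coeff p l j B else 0))"
    using assms
    by (intro sum.cong) (auto simp: triangular_coeffs_def Cp_coeff_extend_column_last[OF hr_elem_triangular hY]
        Cp_coeff_extend_column_less[OF hr_elem_triangular hY])
  also have "\<dots> = Y j A * hr_one B + hr_one A * Y j B
      + (\<Sum>l<Suc m. if j < l \<and> l < m then Y l A * Cp_coeff p l j B else 0)"
    using assms by (simp only: sum.distrib) simp
  also have "(\<Sum>l<Suc m. if j < l \<and> l < m then Y l A * Cp_coeff p l j B else 0) =
      (\<Sum>l\<in>{j<..<m}. Y l A * Cp_coeff p l j B)"
  proof -
    have "{j<..<m} = {l\<in>{..<Suc m}. j < l \<and> l < m}" by auto
    then show ?thesis by (simp only: sum.inter_filter[OF finite_lessThan])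
  qed
  finally show ?thesis by (simp add: X_last)
qed

lemma primitive_extend_column:
  assumes "1 \<le> a" "a \<le> m"
  shows "primitive (extend_column p Y m a m)"
proof -
  define j where "j = a - 1"
  have a: "a = Suc j" "j < m" using assms by (auto simp: j_def)
  have interval: "{l<..m - Suc 0} = {l<..<m}" for l using a by auto
  have "primitive (\<lambda>F. Y j F - (\<Sum>l\<in>{j<..m - 1}. top (Y l) (p (Suc j) l) F))"
  proof (rule primitive_correction[where X = "Cp_coeff p"])
    show "hr_elem (Cp_coeff p l l')" for l l' by (rule hr_elem_Cp_coeff[OF hr_elem_triangular])
    show "primitive (p (Suc j) l)" if "j < l" "l \<le> m - 1" for l
      using T that a by (auto simp: triangular_basis_def)
    show "hr_cop (Y l) (A, B) = Y l A * hr_one B + hr_one A * Y l B + (\<Sum>l'\<in>{l<..m - 1}. Y l' A * Cp_coeff p l' l B)"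
      if "j \<le> l" "l \<le> m - 1" for l A B
      using that a by (simp add: hr_cop_complement_coeff interval)
    show "Cp_coeff p l j = (\<lambda>F. p (Suc j) l F + (\<Sum>l'\<in>{j<..<l}. top (Cp_coeff p l l') (p (Suc j) l') F))"
      if "j < l" for l
      using that by (rule Cp_coeff_rec[OF hr_elem_triangular])
  qed (use a hY in auto)
  then show ?thesis using a by (simp add: extend_column_def interval)
qed

lemma triangular_basis_extend: "triangular_basis (Suc m) (extend_column p Y m) (b(m := w))"
proof -
  have inj: "inj_on b {..<m}" and ind: "independent (b ` {..<m})"
    using T by (auto simp: triangular_basis_def)
  have "primitive (extend_column p Y m i j)" if "1 \<le> i" "i \<le> j" "j < Suc m" for i j
    using that T primitive_extend_column by (cases "j = m") (auto simp: triangular_basis_def extend_column_def)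
  then show ?thesis
    using independent_family_extend[OF inj ind w] coaction_extended_family
    by (simp add: triangular_basis_def hr_elem_extend_column[OF hr_elem_triangular hY])
qed

end

lemma triangular_basis_exists: "m \<le> dim (UNIV :: 'v set) \<Longrightarrow> \<exists>p b. triangular_basis m p b"
proof (induction m)
  case 0
  then show ?case using triangular_basis_0 by blast
next
  case (Suc m)
  then obtain p b where T: "triangular_basis m p b" by auto
  obtain w Y where "w \<notin> span (b ` {..<m})" "\<And>j. hr_elem (Y j)"
    "\<And>F. delta w F = (\<Sum>j<m. sc (Y j F) (b j)) + (if F = {#} then w else 0)"
    using exists_triangular_complement[OF T] Suc.prems by auto
  then show ?case using triangular_basis_extend[OF T] by blast
qed

lemma span_triangular_basis:
  assumes "triangular_basis m p b" "m = dim (UNIV :: 'v set)"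
  shows "span (b ` {..<m}) = UNIV"
proof -
  have inj: "inj_on b {..<m}" and ind: "independent (b ` {..<m})"
    using assms(1) by (auto simp: triangular_basis_def)
  have "card (b ` {..<m}) = m" using card_image[OF inj] by simp
  then have "UNIV \<subseteq> span (b ` {..<m})"
    using assms(2) by (intro card_ge_dim_independent[OF _ ind]) auto
  then show ?thesis by auto
qed

lemma triangular_basis_full:
  obtains p b where "triangular_basis (dim (UNIV :: 'v set)) p b" "span (b ` {..<dim (UNIV :: 'v set)}) = UNIV"
proof -
  obtain p b where T: "triangular_basis (dim (UNIV :: 'v set)) p b"
    using triangular_basis_exists[OF order_refl] by auto
  show ?thesis by (rule that[OF T span_triangular_basis[OF T refl]])
qed

lemma coaction_trivial_if_dim_1:
  assumes "dim (UNIV :: 'v set) = 1"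
  shows "delta x = (\<lambda>F. if F = {#} then x else 0)"
proof -
  obtain p b where T: "triangular_basis 1 p b" and "span (b ` {..<1}) = UNIV"
    using triangular_basis_full assms by metis
  then obtain c where "x = sc c (b 0)"
    by (auto simp: lessThan_Suc span_singleton)
  moreover have "delta (b 0) = (\<lambda>F. if F = {#} then b 0 else 0)"
    using T by (simp add: triangular_basis_def)
  ultimately show ?thesis by (simp add: coaction_scale fun_eq_iff)
qed

end

theorem theorem5p3:
  fixes sc :: "rat \<Rightarrow> 'v::ab_group_add \<Rightarrow> 'v"
    and delta :: "'v \<Rightarrow> forest \<Rightarrow> 'v"
  assumes comod: "left_comodule sc delta"
    and findim: "\<exists>B. finite B \<and> \<not> module.dependent sc B
                   \<and> module.span sc B = UNIV"
  shows "(vector_space.dim sc UNIV = 1 \<longrightarrow> (\<forall>x. delta x = (\<lambda>F. if F = {#} then x else 0)))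
       \<and> (\<forall>n\<ge>1. vector_space.dim sc UNIV = n + 1 \<longrightarrow>
           (\<exists>p :: nat \<Rightarrow> nat \<Rightarrow> forest \<Rightarrow> rat.
              (\<forall>i j. 1 \<le> i \<and> i \<le> j \<and> j \<le> n \<longrightarrow> primitive (p i j)) \<and>
              (\<exists>b :: nat \<Rightarrow> 'v.
                 inj_on b {0..n} \<and>
                 \<not> module.dependent sc (b ` {0..n}) \<and>
                 module.span sc (b ` {0..n}) = UNIV \<and>
                 (\<forall>i\<le>n. delta (b i) =
                    (\<lambda>F. (\<Sum>j<i. sc (Cp_coeff p i j F) (b j)) + (if F = {#} then b i else 0))))))"
proof -
  obtain B where "finite B" "\<not> module.dependent sc B" "module.span sc B = UNIV"
    using findim by blast
  moreover have "vector_space sc" using comod by (simp add: left_comodule_def)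
  ultimately interpret finite_comodule sc B delta
    using comod by (simp add: finite_comodule_def finite_comodule_axioms_def
        finite_dimensional_vector_space_def finite_dimensional_vector_space_axioms_def)
  have "\<exists>p b. (\<forall>i j. 1 \<le> i \<and> i \<le> j \<and> j \<le> n \<longrightarrow> primitive (p i j)) \<and>
      inj_on b {0..n} \<and> independent (b ` {0..n}) \<and> span (b ` {0..n}) = UNIV \<and>
      (\<forall>i\<le>n. delta (b i) = (\<lambda>F. (\<Sum>j<i. sc (Cp_coeff p i j F) (b j)) + (if F = {#} then b i else 0)))"
    if "dim UNIV = n + 1" for n
  proof -
    obtain p b where "triangular_basis (dim UNIV) p b" "span (b ` {..<dim UNIV}) = UNIV"
      by (rule triangular_basis_full)
    then have "triangular_basis (Suc n) p b" "span (b ` {..<Suc n}) = UNIV"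
      unfolding that by simp_all
    moreover have "{0..n} = {..<Suc n}" by auto
    ultimately show ?thesis
      by (intro exI[of _ p] exI[of _ b]) (simp add: triangular_basis_def less_Suc_eq_le)
  qed
  then show ?thesis using coaction_trivial_if_dim_1 by simp
qed

end
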